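(* Let $\lambda_-,\lambda_+$ be two bounded measured geodesic laminations on $\mathbb{H}^2$ that strongly fill, and fix $o\in\mathbb{H}^2$. For each $n>0$ there exists $\varepsilon_n>0$ with the following property. Let $F_-,F_+$ be leaves of $\lambda_-,\lambda_+$ respectively, each meeting the circle $C(o,n)$ of radius $n$ about $o$, with endpoints $a_-,a_+\in\partial_\infty\mathbb{H}^2$, and let $b_-,b_+$ be the first intersection points of $F_-,F_+$ with $C(o,n)$ when travelling from $a_-,a_+$ respectively. Then either the visual distance from $o$ between $a_-$ and $a_+$ is at least $\varepsilon_n$, or the visual distance from $o$ between $b_-$ and $b_+$ is at least $\varepsilon_n$.
   Context: A measured geodesic lamination on $\mathbb{H}^2$ is a closed union of disjoint complete geodesics with a transverse invariant measure of full support; $i(\gamma,\lambda)$ is the transverse measure of a geodesic segment $\gamma$. $\lambda$ is bounded if $i(\gamma,\lambda)\le C$ for all segments of length $1$. $\lambda,\mu$ strongly fill if for every $\varepsilon>0$ there is $c>0$ with $i(\gamma,\lambda)+i(\gamma,\mu)\ge\varepsilon$ for every geodesic segment of length $\ge c$. The visual distance from $o$ between two points of $\mathbb{H}^2\cup\partial_\infty\mathbb{H}^2$ is the angle at $o$ between the geodesic rays from $o$ to them. *)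

theory Defs
  imports "HOL-Analysis.Analysis"
begin

text \<open>Poincare disk model of the hyperbolic plane: H2 is the open unit disk in C,
  the circle at infinity is the unit circle.\<close>

definition hdisk :: "complex set" where
  "hdisk = ball 0 1"

definition hdist :: "complex \<Rightarrow> complex \<Rightarrow> real" where
  "hdist z w = arcosh (1 + 2 * (cmod (z - w))\<^sup>2 / ((1 - (cmod z)\<^sup>2) * (1 - (cmod w)\<^sup>2)))"

definition geodesic_line :: "(real \<Rightarrow> complex) \<Rightarrow> bool" where
  "geodesic_line \<gamma> \<longleftrightarrow> (\<forall>t. \<gamma> t \<in> hdisk) \<and> (\<forall>s t. hdist (\<gamma> s) (\<gamma> t) = \<bar>s - t\<bar>)"

definition geod :: "complex \<Rightarrow> complex \<Rightarrow> complex set" where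
  "geod p q = {z. \<exists>\<gamma>. geodesic_line \<gamma> \<and> (\<gamma> \<longlongrightarrow> p) at_bot \<and> (\<gamma> \<longlongrightarrow> q) at_top \<and> z \<in> range \<gamma>}"

text \<open>Unoriented geodesics are parametrised by pairs of distinct ideal points; each
  unoriented geodesic has exactly one representative in pos_pairs.\<close>
definition pos_pairs :: "(complex \<times> complex) set" where
  "pos_pairs = {(p, q). cmod p = 1 \<and> cmod q = 1 \<and> 0 < Arg (q / p)}"

definition msupp :: "'a::topological_space measure \<Rightarrow> 'a set" where
  "msupp M = {x. \<forall>U. open U \<and> x \<in> U \<longrightarrow> emeasure M U > 0}"

definition leaves :: "(complex \<times> complex) measure \<Rightarrow> complex set set" where
  "leaves M = {geod p q | p q. (p, q) \<in> msupp M \<inter> pos_pairs}"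

text \<open>A measured geodesic lamination, encoded by its transverse measure viewed as a
  measure on the space of geodesics (whose support consists of the leaves, giving full support).\<close>
definition measured_lamination :: "(complex \<times> complex) measure \<Rightarrow> bool" where
  "measured_lamination M \<longleftrightarrow>
     sets M = sets borel \<and>
     emeasure M (UNIV - pos_pairs) = 0 \<and>
     (\<forall>F\<in>leaves M. \<forall>G\<in>leaves M. F \<noteq> G \<longrightarrow> F \<inter> G = {}) \<and>
     (\<forall>z\<in>hdisk. z \<in> closure (\<Union>(leaves M)) \<longrightarrow> z \<in> \<Union>(leaves M)) \<and>
     (\<forall>K. compact K \<and> K \<subseteq> hdisk \<longrightarrow>
        emeasure M {(p, q) \<in> pos_pairs. geod p q \<inter> K \<noteq> {}} < \<infinity>)"

definition hseg :: "complex \<Rightarrow> complex \<Rightarrow> complex set" where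
  "hseg x y = {z \<in> hdisk. hdist x z + hdist z y = hdist x y}"

definition inum :: "complex set \<Rightarrow> (complex \<times> complex) measure \<Rightarrow> ennreal" where
  "inum \<sigma> M = emeasure M {(p, q) \<in> pos_pairs. geod p q \<inter> \<sigma> \<noteq> {} \<and> \<not> \<sigma> \<subseteq> geod p q}"

definition bounded_lam :: "(complex \<times> complex) measure \<Rightarrow> bool" where
  "bounded_lam M \<longleftrightarrow> (\<exists>C::real. \<forall>x\<in>hdisk. \<forall>y\<in>hdisk.
      hdist x y = 1 \<longrightarrow> inum (hseg x y) M \<le> ennreal C)"

definition strongly_fill :: "(complex \<times> complex) measure \<Rightarrow> (complex \<times> complex) measure \<Rightarrow> bool" where
  "strongly_fill M N \<longleftrightarrow> (\<forall>\<epsilon>>0. \<exists>c>0. \<forall>x\<in>hdisk. \<forall>y\<in>hdisk.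
      hdist x y \<ge> c \<longrightarrow> inum (hseg x y) M + inum (hseg x y) N \<ge> ennreal \<epsilon>)"

definition geod_ray :: "complex \<Rightarrow> complex \<Rightarrow> (real \<Rightarrow> complex) \<Rightarrow> bool" where
  "geod_ray ob x \<rho> \<longleftrightarrow> \<rho> 0 = ob \<and> (\<forall>t\<ge>0. \<rho> t \<in> hdisk) \<and>
     (\<forall>s\<ge>0. \<forall>t\<ge>0. hdist (\<rho> s) (\<rho> t) = \<bar>s - t\<bar>) \<and>
     (x \<in> \<rho> ` {0..} \<or> (\<rho> \<longlongrightarrow> x) at_top)"

text \<open>Euclidean angle between two nonzero vectors; the disk model is conformal, so the angle
  between tangent vectors at o is the hyperbolic angle.\<close>
definition vec_angle :: "complex \<Rightarrow> complex \<Rightarrow> real" where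
  "vec_angle u v = arccos (Re (u * cnj v) / (cmod u * cmod v))"

definition visual_dist :: "complex \<Rightarrow> complex \<Rightarrow> complex \<Rightarrow> real" where
  "visual_dist ob x y = (THE \<theta>. \<exists>\<rho>1 \<rho>2 u v. geod_ray ob x \<rho>1 \<and> geod_ray ob y \<rho>2 \<and>
      (\<rho>1 has_vector_derivative u) (at 0 within {0..}) \<and>
      (\<rho>2 has_vector_derivative v) (at 0 within {0..}) \<and> \<theta> = vec_angle u v)"

definition first_hit :: "complex \<Rightarrow> real \<Rightarrow> (real \<Rightarrow> complex) \<Rightarrow> real \<Rightarrow> bool" where
  "first_hit ob r \<gamma> t \<longleftrightarrow> hdist ob (\<gamma> t) = r \<and> (\<forall>s<t. hdist ob (\<gamma> s) \<noteq> r)"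

end

theory Submission
  imports Defs
begin

(* In the Poincare disk the maps z \<mapsto> (z - c) / (1 - cnj c * z) are isometries, and every
   geodesic is the image of a diameter.  A leaf meeting the circle C(o, r) at b is therefore
   described by the position v of b seen from o (a point of the Euclidean circle of radius
   tanh (r / 2)) and a unit direction w.  Since the support of a transverse measure is closed,
   the pairs (v, w) belonging to leaves of a lamination form a compact set.  On pairs of such
   charts, one for each lamination, the distance between the v's plus the distance between the
   directions from o of the backward endpoints is continuous, and it is at most the sum of the
   two visual distances of the statement.  It vanishes only if both charts describe the same geodesic,
   which would be a common leaf; but a segment contained in a leaf has transverse measure zero,
   so strong filling excludes common leaves.  Hence the function has a positive minimum, and half
   of it is the required epsilon. *)

lemma compact_pos_lower_bound:
  fixes f :: "'a::topological_space \<Rightarrow> real"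
  assumes "compact K" "continuous_on K f" "\<And>x. x \<in> K \<Longrightarrow> 0 < f x"
  shows "\<exists>m>0. \<forall>x\<in>K. m \<le> f x"
proof (cases "K = {}")
  case False
  then obtain x0 where "x0 \<in> K" "\<forall>x\<in>K. f x0 \<le> f x"
    using continuous_attains_inf[OF assms(1) False assms(2)] by blast
  then show ?thesis
    using assms(3) by blast
qed (auto intro: exI[of _ 1])

lemma range_shift: "range (\<lambda>t. f (t + s)) = range (f :: real \<Rightarrow> 'a)"
proof (intro equalityI subsetI)
  fix z
  assume "z \<in> range f"
  then obtain t where "z = f t"
    by auto
  then show "z \<in> range (\<lambda>t. f (t + s))"
    using rangeI[of "\<lambda>t. f (t + s)" "t - s"] by simp
qed auto

lemma tendsto_at_top_shift:
  fixes f :: "real \<Rightarrow> 'a::topological_space"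
  shows "(f \<longlongrightarrow> a) at_top \<Longrightarrow> ((\<lambda>t. f (t + s)) \<longlongrightarrow> a) at_top"
  by (rule filterlim_compose[of f, OF _ filterlim_tendsto_add_at_top[OF tendsto_const filterlim_ident,
        of s, unfolded add.commute[of s]]])

lemma tendsto_at_bot_shift:
  fixes f :: "real \<Rightarrow> 'a::topological_space"
  assumes "(f \<longlongrightarrow> a) at_bot"
  shows "((\<lambda>t. f (t + s)) \<longlongrightarrow> a) at_bot"
proof -
  have "((\<lambda>t. f (- t)) \<longlongrightarrow> a) at_top"
    using assms by (simp add: filterlim_at_bot_mirror)
  then have "((\<lambda>t. f (- (t + - s))) \<longlongrightarrow> a) at_top"
    by (rule tendsto_at_top_shift)
  then show ?thesis
    by (simp add: filterlim_at_bot_mirror)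
qed

lemma one_minus_norm_sq_pos: "cmod z < 1 \<Longrightarrow> 1 - (cmod z)\<^sup>2 > 0"
  by (simp add: abs_square_less_1)

lemma one_minus_mult_cnj: "1 - c * cnj c = of_real (1 - (cmod c)\<^sup>2)"
  by (simp only: of_real_diff of_real_1 complex_norm_square)

lemma norm_diff_sq: "(cmod (z - w))\<^sup>2 = (cmod z)\<^sup>2 + (cmod w)\<^sup>2 - 2 * Re (z * cnj w)"
  by (simp only: cmod_power2) (simp add: algebra_simps power2_eq_square)

lemma norm_diff_scaled_sq:
  "(cmod (z - of_real k * w))\<^sup>2 = (cmod z)\<^sup>2 + k\<^sup>2 * (cmod w)\<^sup>2 - 2 * k * Re (z * cnj w)"
  by (simp add: norm_diff_sq norm_mult power_mult_distrib algebra_simps)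

lemma eq_scaled_if_abs_Re_mult_cnj:
  assumes w: "w \<noteq> 0" and eq: "\<bar>Re (z * cnj w)\<bar> = cmod z * cmod w"
  shows "z = of_real (Re (z * cnj w) / (cmod w)\<^sup>2) * w"
proof -
  define R where "R = Re (z * cnj w)"
  define n where "n = cmod w"
  define k where "k = R / n\<^sup>2"
  have n: "n \<noteq> 0" using w by (simp add: n_def)
  have "R\<^sup>2 = (cmod z * n)\<^sup>2"
    using eq unfolding R_def n_def by (metis power2_abs)
  then have "R\<^sup>2 / n\<^sup>2 = (cmod z)\<^sup>2"
    using n by (simp add: power_mult_distrib)
  moreover have "k\<^sup>2 * n\<^sup>2 = R\<^sup>2 / n\<^sup>2" "2 * k * R = 2 * (R\<^sup>2 / n\<^sup>2)"
    using n by (simp_all add: k_def power2_eq_square)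
  ultimately have "(cmod z)\<^sup>2 + k\<^sup>2 * n\<^sup>2 - 2 * k * R = 0"
    by simp
  then have "(cmod (z - of_real k * w))\<^sup>2 = 0"
    by (simp add: norm_diff_scaled_sq R_def n_def)
  then show ?thesis
    by (simp add: k_def R_def n_def)
qed

lemma eq_scaled_if_Re_mult_cnj_eq:
  assumes w: "w \<noteq> 0" and eq: "Re (z * cnj w) = cmod z * cmod w"
  shows "z = of_real (cmod z / cmod w) * w"
proof -
  have "cmod z * cmod w / (cmod w)\<^sup>2 = cmod z / cmod w"
    using w by (simp add: power2_eq_square)
  moreover have "z = of_real (Re (z * cnj w) / (cmod w)\<^sup>2) * w"
    by (rule eq_scaled_if_abs_Re_mult_cnj[OF w]) (unfold eq, simp)
  ultimately show ?thesis
    unfolding eq by simp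
qed

lemma eq_scaled_if_Re_mult_cnj_eq_minus:
  assumes w: "w \<noteq> 0" and eq: "Re (z * cnj w) = - (cmod z * cmod w)"
  shows "z = - of_real (cmod z / cmod w) * w"
proof -
  have "- (cmod z * cmod w) / (cmod w)\<^sup>2 = - (cmod z / cmod w)"
    using w by (simp add: power2_eq_square)
  moreover have "z = of_real (Re (z * cnj w) / (cmod w)\<^sup>2) * w"
    by (rule eq_scaled_if_abs_Re_mult_cnj[OF w]) (unfold eq, simp)
  ultimately show ?thesis
    unfolding eq by simp
qed

section \<open>Mobius transformations of the disk\<close>

definition mobius :: "complex \<Rightarrow> complex \<Rightarrow> complex" where
  "mobius c z = (z - c) / (1 - cnj c * z)"

definition hcosh :: "complex \<Rightarrow> complex \<Rightarrow> real" where
  "hcosh z w = 1 + 2 * (cmod (z - w))\<^sup>2 / ((1 - (cmod z)\<^sup>2) * (1 - (cmod w)\<^sup>2))"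

lemma hdist_eq_arcosh_hcosh: "hdist z w = arcosh (hcosh z w)"
  by (simp add: hdist_def hcosh_def)

lemma hcosh_ge_1: "cmod z < 1 \<Longrightarrow> cmod w < 1 \<Longrightarrow> hcosh z w \<ge> 1"
  using one_minus_norm_sq_pos[of z] one_minus_norm_sq_pos[of w] by (simp add: hcosh_def)

lemma cosh_hdist: "cmod z < 1 \<Longrightarrow> cmod w < 1 \<Longrightarrow> cosh (hdist z w) = hcosh z w"
  using hcosh_ge_1 by (simp add: hdist_eq_arcosh_hcosh)

lemma hdist_nonneg: "cmod z < 1 \<Longrightarrow> cmod w < 1 \<Longrightarrow> hdist z w \<ge> 0"
  using hcosh_ge_1 by (simp add: hdist_eq_arcosh_hcosh)

lemma hdist_commute: "hdist z w = hdist w z"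
  unfolding hdist_def by (simp add: norm_minus_commute mult.commute)

lemma hdist_self [simp]: "hdist z z = 0"
  unfolding hdist_def by simp

lemma mobius_denom_nonzero:
  assumes "cmod c < 1" "cmod z \<le> 1"
  shows "1 - cnj c * z \<noteq> 0"
proof
  assume "1 - cnj c * z = 0"
  then have "cnj c * z = 1" by simp
  then have "cmod (cnj c * z) = 1" by simp
  moreover have "cmod (cnj c * z) < 1"
    using assms mult_left_le[of "cmod z" "cmod c"] by (simp add: norm_mult)
  ultimately show False by simp
qed

lemma mobius_self [simp]: "mobius c c = 0"
  by (simp add: mobius_def)

lemma mobius_0 [simp]: "mobius c 0 = - c"
  by (simp add: mobius_def)

lemma one_minus_norm_mobius_sq:
  assumes "cmod c < 1" "cmod z \<le> 1"
  shows "1 - (cmod (mobius c z))\<^sup>2 = (1 - (cmod c)\<^sup>2) * (1 - (cmod z)\<^sup>2) / (cmod (1 - cnj c * z))\<^sup>2"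
proof -
  have "(cmod (1 - cnj c * z))\<^sup>2 - (cmod (z - c))\<^sup>2 = (1 - (cmod c)\<^sup>2) * (1 - (cmod z)\<^sup>2)"
    by (simp only: cmod_power2) (simp add: algebra_simps power2_eq_square)
  moreover have "(cmod (mobius c z))\<^sup>2 = (cmod (z - c))\<^sup>2 / (cmod (1 - cnj c * z))\<^sup>2"
    by (simp add: mobius_def norm_divide power_divide)
  ultimately show ?thesis
    using mobius_denom_nonzero[OF assms] by (simp add: field_simps)
qed

lemma norm_mobius_less_1:
  assumes "cmod c < 1" "cmod z < 1"
  shows "cmod (mobius c z) < 1"
proof -
  have "1 - (cmod (mobius c z))\<^sup>2 > 0"
    using assms one_minus_norm_sq_pos[of c] one_minus_norm_sq_pos[of z] mobius_denom_nonzero[of c z]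
    by (simp add: one_minus_norm_mobius_sq)
  then show ?thesis
    by (simp add: abs_square_less_1)
qed

lemma norm_mobius_eq_1: "cmod c < 1 \<Longrightarrow> cmod z = 1 \<Longrightarrow> cmod (mobius c z) = 1"
  using one_minus_norm_mobius_sq[of c z] norm_ge_zero[of "mobius c z"] by (auto simp: power2_eq_1_iff)

lemma mobius_diff:
  assumes "cmod c < 1" "cmod z \<le> 1" "cmod w \<le> 1"
  shows "mobius c z - mobius c w = (1 - c * cnj c) * (z - w) / ((1 - cnj c * z) * (1 - cnj c * w))"
  using mobius_denom_nonzero[OF assms(1,2)] mobius_denom_nonzero[OF assms(1,3)]
  unfolding mobius_def by (simp add: field_simps)

lemma hcosh_mobius:
  assumes c: "cmod c < 1" and z: "cmod z < 1" and w: "cmod w < 1"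
  shows "hcosh (mobius c z) (mobius c w) = hcosh z w"
proof -
  define A where "A = 1 - (cmod c)\<^sup>2"
  define Dz where "Dz = (cmod (1 - cnj c * z))\<^sup>2"
  define Dw where "Dw = (cmod (1 - cnj c * w))\<^sup>2"
  have nz: "A \<noteq> 0" "Dz \<noteq> 0" "Dw \<noteq> 0" "1 - (cmod z)\<^sup>2 \<noteq> 0" "1 - (cmod w)\<^sup>2 \<noteq> 0"
    using one_minus_norm_sq_pos[OF c] one_minus_norm_sq_pos[OF z] one_minus_norm_sq_pos[OF w]
      mobius_denom_nonzero[OF c] z w by (auto simp: A_def Dz_def Dw_def)
  have "cmod (1 - c * cnj c) = A"
    unfolding one_minus_mult_cnj norm_of_real A_def by (rule abs_of_pos[OF one_minus_norm_sq_pos[OF c]])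
  then have diff: "(cmod (mobius c z - mobius c w))\<^sup>2 = A\<^sup>2 * (cmod (z - w))\<^sup>2 / (Dz * Dw)"
    using c z w by (simp add: mobius_diff norm_divide norm_mult power_divide power_mult_distrib
        Dz_def Dw_def)
  have e1: "1 - (cmod (mobius c z))\<^sup>2 = A * (1 - (cmod z)\<^sup>2) / Dz"
    and e2: "1 - (cmod (mobius c w))\<^sup>2 = A * (1 - (cmod w)\<^sup>2) / Dw"
    using one_minus_norm_mobius_sq c z w by (auto simp: A_def Dz_def Dw_def)
  have alg: "2 * (A\<^sup>2 * X / (Dz * Dw)) / ((A * Pz / Dz) * (A * Pw / Dw)) = 2 * X / (Pz * Pw)"
    if "Pz \<noteq> 0" "Pw \<noteq> 0" for X Pz Pw :: real
    using nz(1-3) that by (simp add: divide_simps power2_eq_square)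
  show ?thesis
    unfolding hcosh_def diff e1 e2 by (subst alg) (use nz in auto)
qed

lemma hdist_mobius:
  "cmod c < 1 \<Longrightarrow> cmod z < 1 \<Longrightarrow> cmod w < 1 \<Longrightarrow> hdist (mobius c z) (mobius c w) = hdist z w"
  by (simp add: hdist_eq_arcosh_hcosh hcosh_mobius)

lemma mobius_inverse:
  assumes c: "cmod c < 1" and z: "cmod z \<le> 1"
  shows "mobius (- c) (mobius c z) = z"
proof -
  have nz: "1 - cnj c * z \<noteq> 0" "1 - c * cnj c \<noteq> 0"
    using mobius_denom_nonzero[OF c z] one_minus_norm_sq_pos[OF c]
    by (simp_all only: one_minus_mult_cnj of_real_eq_0_iff) simp
  have num: "mobius c z + c = z * (1 - c * cnj c) / (1 - cnj c * z)"
    and den: "1 + cnj c * mobius c z = (1 - c * cnj c) / (1 - cnj c * z)"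
    using nz(1) unfolding mobius_def by (simp_all add: field_simps)
  have "mobius (- c) (mobius c z) = (mobius c z + c) / (1 + cnj c * mobius c z)"
    by (simp add: mobius_def)
  also have "\<dots> = z"
  proof -
    have "x * y / d / (y / d) = x" if "y \<noteq> 0" "d \<noteq> 0" for x y d :: complex
      using that by simp
    then show ?thesis
      unfolding num den using nz by blast
  qed
  finally show ?thesis .
qed

lemma mobius_inverse':
  "cmod c < 1 \<Longrightarrow> cmod z \<le> 1 \<Longrightarrow> mobius c (mobius (- c) z) = z"
  using mobius_inverse[of "- c" z] by simp

lemma tendsto_mobius:
  assumes "(C \<longlongrightarrow> c) F" "(Z \<longlongrightarrow> z) F" "cmod c < 1" "cmod z \<le> 1"
  shows "((\<lambda>x. mobius (C x) (Z x)) \<longlongrightarrow> mobius c z) F"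
  unfolding mobius_def using mobius_denom_nonzero[OF assms(3,4)] by (intro tendsto_intros assms)

definition tanh_half :: "real \<Rightarrow> real" where
  "tanh_half t = tanh (t / 2)"

lemma abs_tanh_half_less_1: "\<bar>tanh_half t\<bar> < 1"
  unfolding tanh_half_def using tanh_real_bounds[of "t / 2"] by auto

lemma tanh_half_0 [simp]: "tanh_half 0 = 0"
  by (simp add: tanh_half_def)

lemma tanh_half_pos: "t > 0 \<Longrightarrow> tanh_half t > 0"
  by (simp add: tanh_half_def)

lemma artanh_nonneg: "0 \<le> x \<Longrightarrow> x < 1 \<Longrightarrow> 0 \<le> artanh (x::real)"
  unfolding artanh_def by simp

lemma tanh_half_double_artanh:
  assumes "\<bar>a\<bar> < 1"
  shows "tanh_half (2 * artanh a) = a"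
proof -
  have pos: "0 < 1 + a" "0 < 1 - a" using assms by auto
  have "exp (- 2 * (2 * artanh a / 2)) = (1 - a) / (1 + a)"
    using pos by (simp add: artanh_def exp_minus)
  moreover have "1 - (1 - a) / (1 + a) = 2 * a / (1 + a)" "1 + (1 - a) / (1 + a) = 2 / (1 + a)"
    using pos by (simp_all add: field_simps)
  ultimately show ?thesis
    using pos unfolding tanh_half_def tanh_real_altdef by simp
qed

lemma one_minus_sq_eq: "1 - r\<^sup>2 = (1 - r) * (1 + (r::real))"
  by (simp add: algebra_simps power2_eq_square)

lemma cosh_double_artanh:
  fixes r :: real
  assumes "\<bar>r\<bar> < 1"
  shows "cosh (2 * artanh r) = (1 + r\<^sup>2) / (1 - r\<^sup>2)"
proof -
  have pos: "0 < 1 + r" "0 < 1 - r" and nz: "1 + r \<noteq> 0" "1 - r \<noteq> 0" using assms by auto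
  then have "cosh (2 * artanh r) = ((1 + r) / (1 - r) + inverse ((1 + r) / (1 - r))) / 2"
    by (simp add: artanh_def cosh_ln_real)
  also have "\<dots> = (1 + r\<^sup>2) / (1 - r\<^sup>2)"
    using nz unfolding one_minus_sq_eq by (simp add: divide_simps) (simp add: algebra_simps power2_eq_square)
  finally show ?thesis .
qed

lemma sinh_double_artanh:
  fixes r :: real
  assumes "\<bar>r\<bar> < 1"
  shows "sinh (2 * artanh r) = 2 * r / (1 - r\<^sup>2)"
proof -
  have pos: "0 < 1 + r" "0 < 1 - r" and nz: "1 + r \<noteq> 0" "1 - r \<noteq> 0" using assms by auto
  then have "sinh (2 * artanh r) = ((1 + r) / (1 - r) - inverse ((1 + r) / (1 - r))) / 2"
    by (simp add: artanh_def sinh_ln_real)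
  also have "\<dots> = 2 * r / (1 - r\<^sup>2)"
    using nz unfolding one_minus_sq_eq by (simp add: divide_simps) (simp add: algebra_simps power2_eq_square)
  finally show ?thesis .
qed

lemma hdist_0_eq_artanh:
  assumes z: "cmod z < 1"
  shows "hdist 0 z = 2 * artanh (cmod z)"
proof -
  have "hcosh 0 z = (1 + (cmod z)\<^sup>2) / (1 - (cmod z)\<^sup>2)"
    using one_minus_norm_sq_pos[OF z] unfolding hcosh_def by (simp add: field_simps)
  also have "\<dots> = cosh (2 * artanh (cmod z))"
    using z by (simp add: cosh_double_artanh)
  finally show ?thesis
    using z artanh_nonneg[of "cmod z"] by (simp add: hdist_eq_arcosh_hcosh arcosh_cosh_real)
qed

lemma cosh_hdist_0: "cmod z < 1 \<Longrightarrow> cosh (hdist 0 z) = (1 + (cmod z)\<^sup>2) / (1 - (cmod z)\<^sup>2)"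
  by (simp add: hdist_0_eq_artanh cosh_double_artanh)

lemma sinh_hdist_0: "cmod z < 1 \<Longrightarrow> sinh (hdist 0 z) = 2 * cmod z / (1 - (cmod z)\<^sup>2)"
  by (simp add: hdist_0_eq_artanh sinh_double_artanh)

lemma norm_eq_tanh_half_hdist_0: "cmod z < 1 \<Longrightarrow> cmod z = tanh_half (hdist 0 z)"
  by (simp add: hdist_0_eq_artanh tanh_half_double_artanh)

lemma hcosh_eq:
  assumes z: "cmod z < 1" and w: "cmod w < 1"
  shows "hcosh z w = ((1 + (cmod z)\<^sup>2) * (1 + (cmod w)\<^sup>2) - 4 * Re (z * cnj w))
                      / ((1 - (cmod z)\<^sup>2) * (1 - (cmod w)\<^sup>2))"
proof -
  have frac_eq: "1 + 2 * (a + b - 2 * \<rho>) / ((1 - a) * (1 - b))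
      = ((1 + a) * (1 + b) - 4 * \<rho>) / ((1 - a) * (1 - b))" if "a < 1" "b < 1" for a b \<rho> :: real
  proof -
    have nz: "(1 - a) * (1 - b) \<noteq> 0" using that by simp
    show ?thesis by (subst add_divide_eq_iff[OF nz]) (simp add: algebra_simps)
  qed
  show ?thesis
    unfolding hcosh_def norm_diff_sq
    by (rule frac_eq) (use one_minus_norm_sq_pos[OF z] one_minus_norm_sq_pos[OF w] in auto)
qed

text \<open>Comparing \<open>cosh (a \<mp> b)\<close> with the explicit formula for \<open>hcosh\<close> determines the inner
  product.\<close>

lemma Re_mult_cnj_if_hdist_add:
  assumes z: "cmod z < 1" and w: "cmod w < 1"
    and sum: "hdist 0 z + hdist z w = hdist 0 w"
  shows "Re (z * cnj w) = cmod z * cmod w"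
proof -
  let ?r = "cmod z" and ?s = "cmod w"
  have "hdist z w = hdist 0 w - hdist 0 z"
    using sum by simp
  then have "hcosh z w = cosh (hdist 0 w - hdist 0 z)"
    using cosh_hdist[OF z w] by simp
  also have "\<dots> = ((1 + ?s\<^sup>2) * (1 + ?r\<^sup>2) - 2 * ?s * (2 * ?r)) / ((1 - ?s\<^sup>2) * (1 - ?r\<^sup>2))"
    by (simp only: cosh_diff cosh_hdist_0[OF z] cosh_hdist_0[OF w] sinh_hdist_0[OF z]
        sinh_hdist_0[OF w] times_divide_times_eq diff_divide_distrib[symmetric])
  finally show ?thesis
    using one_minus_norm_sq_pos[OF z] one_minus_norm_sq_pos[OF w]
    by (simp add: hcosh_eq[OF z w] mult.commute[of "1 - ?s\<^sup>2"] mult.commute[of "1 + ?s\<^sup>2"])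
      (auto simp: algebra_simps)
qed

lemma Re_mult_cnj_if_hdist_add_through_0:
  assumes z: "cmod z < 1" and w: "cmod w < 1"
    and sum: "hdist z 0 + hdist 0 w = hdist z w"
  shows "Re (z * cnj w) = - (cmod z * cmod w)"
proof -
  let ?r = "cmod z" and ?s = "cmod w"
  have "hdist z w = hdist 0 w + hdist 0 z"
    using sum hdist_commute[of z 0] by simp
  then have "hcosh z w = cosh (hdist 0 w + hdist 0 z)"
    using cosh_hdist[OF z w] by simp
  also have "\<dots> = ((1 + ?s\<^sup>2) * (1 + ?r\<^sup>2) + 2 * ?s * (2 * ?r)) / ((1 - ?s\<^sup>2) * (1 - ?r\<^sup>2))"
    by (simp only: cosh_add cosh_hdist_0[OF z] cosh_hdist_0[OF w] sinh_hdist_0[OF z]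
        sinh_hdist_0[OF w] times_divide_times_eq add_divide_distrib[symmetric])
  finally show ?thesis
    using one_minus_norm_sq_pos[OF z] one_minus_norm_sq_pos[OF w]
    by (simp add: hcosh_eq[OF z w] mult.commute[of "1 - ?s\<^sup>2"] mult.commute[of "1 + ?s\<^sup>2"])
      (auto simp: algebra_simps)
qed

lemma eq_scaled_if_hdist_add:
  assumes "hdist 0 z + hdist z w = hdist 0 w" and "cmod z < 1" "cmod w < 1" "w \<noteq> 0"
  shows "z = of_real (cmod z / cmod w) * w"
  using eq_scaled_if_Re_mult_cnj_eq[OF assms(4) Re_mult_cnj_if_hdist_add[OF assms(2,3,1)]] .

lemma eq_scaled_if_hdist_add_through_0:
  assumes "hdist z 0 + hdist 0 w = hdist z w" and "cmod z < 1" "cmod w < 1" "w \<noteq> 0"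
  shows "z = - of_real (cmod z / cmod w) * w"
  using eq_scaled_if_Re_mult_cnj_eq_minus[OF assms(4) Re_mult_cnj_if_hdist_add_through_0[OF assms(2,3,1)]] .

section \<open>Geodesics are Mobius images of diameters\<close>

definition radial_geodesic :: "complex \<Rightarrow> real \<Rightarrow> complex" where
  "radial_geodesic u t = of_real (tanh_half t) * u"

definition geodesic_through :: "complex \<Rightarrow> complex \<Rightarrow> real \<Rightarrow> complex" where
  "geodesic_through b u t = mobius (- b) (radial_geodesic u t)"

lemma norm_radial_geodesic: "cmod u = 1 \<Longrightarrow> cmod (radial_geodesic u t) = \<bar>tanh_half t\<bar>"
  by (simp add: radial_geodesic_def norm_mult)

lemma radial_geodesic_in_disk: "cmod u = 1 \<Longrightarrow> cmod (radial_geodesic u t) < 1"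
  by (simp add: norm_radial_geodesic abs_tanh_half_less_1)

lemma hdist_0_radial_geodesic:
  assumes u: "cmod u = 1"
  shows "hdist 0 (radial_geodesic u t) = \<bar>t\<bar>"
proof -
  have "hdist 0 (radial_geodesic u t) = 2 * artanh \<bar>tanh_half t\<bar>"
    using radial_geodesic_in_disk[OF u] by (simp add: hdist_0_eq_artanh norm_radial_geodesic[OF u])
  also have "\<dots> = 2 * artanh (tanh \<bar>t / 2\<bar>)"
    unfolding tanh_half_def by (simp only: tanh_real_abs)
  finally show ?thesis
    by (simp add: artanh_tanh_real)
qed

lemma mobius_radial_geodesic:
  assumes u: "cmod u = 1"
  shows "mobius (radial_geodesic u s) (radial_geodesic u t) = radial_geodesic u (t - s)"
proof -
  have uu: "cnj u * u = 1"
    using u by (metis complex_norm_square mult.commute of_real_1 power_one)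
  have "\<bar>tanh_half s\<bar> * \<bar>tanh_half t\<bar> < 1 * 1"
    by (rule mult_strict_mono') (use abs_tanh_half_less_1 in auto)
  then have nz: "1 - tanh_half s * tanh_half t \<noteq> 0"
    using abs_ge_self[of "tanh_half s * tanh_half t"] by (auto simp: abs_mult)
  have "tanh_half (t - s) = (tanh_half t - tanh_half s) / (1 - tanh_half s * tanh_half t)"
    unfolding tanh_half_def using tanh_add[of "t / 2" "- (s / 2)"]
    by (simp add: diff_divide_distrib mult.commute)
  moreover have "1 - cnj (radial_geodesic u s) * radial_geodesic u t
      = of_real (1 - tanh_half s * tanh_half t)"
    using uu by (simp add: radial_geodesic_def algebra_simps)
  moreover have "radial_geodesic u t - radial_geodesic u s = of_real (tanh_half t - tanh_half s) * u"
    by (simp add: radial_geodesic_def algebra_simps)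
  ultimately show ?thesis
    unfolding mobius_def by (simp add: radial_geodesic_def)
qed

lemma hdist_radial_geodesic:
  assumes u: "cmod u = 1"
  shows "hdist (radial_geodesic u s) (radial_geodesic u t) = \<bar>s - t\<bar>"
proof -
  have "hdist (radial_geodesic u s) (radial_geodesic u t)
      = hdist (mobius (radial_geodesic u s) (radial_geodesic u s))
              (mobius (radial_geodesic u s) (radial_geodesic u t))"
    using hdist_mobius radial_geodesic_in_disk[OF u] by metis
  also have "\<dots> = \<bar>s - t\<bar>"
    using mobius_radial_geodesic[OF u, of s] hdist_0_radial_geodesic[OF u] by simp
  finally show ?thesis .
qed

lemma geodesic_line_in_disk: "geodesic_line \<gamma> \<Longrightarrow> cmod (\<gamma> t) < 1"
  unfolding geodesic_line_def hdisk_def by auto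

lemma geodesic_line_radial_geodesic: "cmod u = 1 \<Longrightarrow> geodesic_line (radial_geodesic u)"
  unfolding geodesic_line_def hdisk_def by (simp add: radial_geodesic_in_disk hdist_radial_geodesic)

lemma geodesic_line_mobius:
  "cmod c < 1 \<Longrightarrow> geodesic_line \<gamma> \<Longrightarrow> geodesic_line (\<lambda>t. mobius c (\<gamma> t))"
  unfolding geodesic_line_def hdisk_def by (auto simp: norm_mobius_less_1 hdist_mobius)

lemma geodesic_line_geodesic_through:
  "cmod b < 1 \<Longrightarrow> cmod u = 1 \<Longrightarrow> geodesic_line (geodesic_through b u)"
  unfolding geodesic_through_def
  by (rule geodesic_line_mobius) (simp_all add: geodesic_line_radial_geodesic)

lemma geodesic_line_shift: "geodesic_line \<gamma> \<Longrightarrow> geodesic_line (\<lambda>t. \<gamma> (t + s))"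
  unfolding geodesic_line_def by auto

lemma geodesic_line_reverse: "geodesic_line \<gamma> \<Longrightarrow> geodesic_line (\<lambda>t. \<gamma> (- t))"
  unfolding geodesic_line_def by (auto simp: abs_minus_commute)

lemma geodesic_through_0 [simp]: "geodesic_through b u 0 = b"
  by (simp add: geodesic_through_def radial_geodesic_def)

lemma mobius_geodesic_through:
  "cmod b < 1 \<Longrightarrow> cmod u = 1 \<Longrightarrow> mobius b (geodesic_through b u t) = radial_geodesic u t"
  unfolding geodesic_through_def using radial_geodesic_in_disk[of u t]
  by (simp add: mobius_inverse')

lemma radial_geodesic_at_top: "(radial_geodesic u \<longlongrightarrow> u) at_top"
proof -
  have "filterlim (\<lambda>t::real. t / 2) at_top at_top"
    by (intro filterlim_tendsto_pos_mult_at_top[of "\<lambda>_. 1/2" "1/2" at_top "\<lambda>t. t", simplified])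
       (auto simp: filterlim_ident)
  then have "(tanh_half \<longlongrightarrow> 1) at_top"
    unfolding tanh_half_def[abs_def] using tanh_real_at_top filterlim_compose by blast
  from tendsto_mult_right[OF tendsto_of_real[OF this], of u]
  show ?thesis
    unfolding radial_geodesic_def[abs_def] by simp
qed

lemma radial_geodesic_at_bot: "(radial_geodesic u \<longlongrightarrow> - u) at_bot"
proof -
  have "radial_geodesic u (- t) = radial_geodesic (- u) t" for t
    by (simp add: radial_geodesic_def tanh_half_def)
  then show ?thesis
    using radial_geodesic_at_top[of "- u"] by (simp add: filterlim_at_bot_mirror)
qed

lemma geodesic_through_at_top:
  "cmod b < 1 \<Longrightarrow> cmod u = 1 \<Longrightarrow> (geodesic_through b u \<longlongrightarrow> mobius (- b) u) at_top"
  unfolding geodesic_through_def[abs_def]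
  by (rule tendsto_mobius[OF tendsto_const radial_geodesic_at_top]) simp_all

lemma geodesic_through_at_bot:
  "cmod b < 1 \<Longrightarrow> cmod u = 1 \<Longrightarrow> (geodesic_through b u \<longlongrightarrow> mobius (- b) (- u)) at_bot"
  unfolding geodesic_through_def[abs_def]
  by (rule tendsto_mobius[OF tendsto_const radial_geodesic_at_bot]) simp_all

lemma geodesic_ray_from_0:
  assumes start: "\<rho> 0 = 0" and disk: "\<forall>t\<ge>0. cmod (\<rho> t) < 1"
    and isom: "\<forall>s\<ge>0. \<forall>t\<ge>0. hdist (\<rho> s) (\<rho> t) = \<bar>s - t\<bar>"
  shows "\<exists>u. cmod u = 1 \<and> (\<forall>t\<ge>0. \<rho> t = radial_geodesic u t)"
proof -
  have norm_\<rho>: "cmod (\<rho> t) = tanh_half t" if "t \<ge> 0" for t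
    using norm_eq_tanh_half_hdist_0[of "\<rho> t"] isom[rule_format, of 0 t] start disk that by simp
  have pos: "tanh_half 1 > 0"
    by (simp add: tanh_half_pos)
  define u where "u = \<rho> 1 / of_real (tanh_half 1)"
  have u: "cmod u = 1" and \<rho>1: "\<rho> 1 = of_real (tanh_half 1) * u"
    using norm_\<rho>[of 1] pos by (simp_all add: u_def norm_divide)
  have "\<rho> t = radial_geodesic u t" if t: "t \<ge> 0" for t
  proof (cases "t \<le> 1")
    case True
    then have "hdist 0 (\<rho> t) + hdist (\<rho> t) (\<rho> 1) = hdist 0 (\<rho> 1)"
      using isom[rule_format, of 0 t] isom[rule_format, of t 1] isom[rule_format, of 0 1] start t
      by simp
    then have "\<rho> t = of_real (cmod (\<rho> t) / cmod (\<rho> 1)) * \<rho> 1"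
      by (rule eq_scaled_if_hdist_add) (use disk t norm_\<rho>[of 1] pos abs_tanh_half_less_1[of 1] in auto)
    then show ?thesis
      unfolding norm_\<rho>[OF t] norm_\<rho>[of 1, simplified] \<rho>1 radial_geodesic_def using pos u by (simp add: norm_mult)
  next
    case False
    then have "hdist 0 (\<rho> 1) + hdist (\<rho> 1) (\<rho> t) = hdist 0 (\<rho> t)"
      using isom[rule_format, of 0 t] isom[rule_format, of 1 t] isom[rule_format, of 0 1] start t
      by simp
    then have "\<rho> 1 = of_real (cmod (\<rho> 1) / cmod (\<rho> t)) * \<rho> t"
      by (rule eq_scaled_if_hdist_add) (use disk t norm_\<rho>[OF t] tanh_half_pos[of t] abs_tanh_half_less_1[of t] False in auto)
    then have "of_real (tanh_half 1) * u = of_real (tanh_half 1 / tanh_half t) * \<rho> t"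
      using norm_\<rho>[OF t] \<rho>1 u pos by (simp add: norm_mult)
    then show ?thesis
      using pos tanh_half_pos[of t] False unfolding radial_geodesic_def by (simp add: field_simps)
  qed
  then show ?thesis
    using u by blast
qed

lemma geodesic_line_from_0:
  assumes g: "geodesic_line \<gamma>" and start: "\<gamma> 0 = 0"
  shows "\<exists>u. cmod u = 1 \<and> \<gamma> = radial_geodesic u"
proof -
  have disk: "\<And>t. cmod (\<gamma> t) < 1" and isom: "\<And>s t. hdist (\<gamma> s) (\<gamma> t) = \<bar>s - t\<bar>"
    using g unfolding geodesic_line_def hdisk_def by auto
  obtain u where u: "cmod u = 1" "\<forall>t\<ge>0. \<gamma> t = radial_geodesic u t"
    using geodesic_ray_from_0[of \<gamma>] start disk isom by blast
  obtain v where v: "cmod v = 1" "\<forall>t\<ge>0. \<gamma> (- t) = radial_geodesic v t"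
    using geodesic_ray_from_0[of "\<lambda>t. \<gamma> (- t)"] start disk isom by (auto simp: abs_minus_commute)
  have "hdist (\<gamma> (- 1)) 0 + hdist 0 (\<gamma> 1) = hdist (\<gamma> (- 1)) (\<gamma> 1)"
    using isom[of "- 1" 0] isom[of 0 1] isom[of "- 1" 1] start by simp
  moreover have "\<gamma> 1 \<noteq> 0"
    using u tanh_half_pos[of 1] by (auto simp: radial_geodesic_def)
  ultimately have "\<gamma> (- 1) = - of_real (cmod (\<gamma> (- 1)) / cmod (\<gamma> 1)) * \<gamma> 1"
    using eq_scaled_if_hdist_add_through_0 disk by blast
  then have "\<gamma> (- 1) = - \<gamma> 1"
    using u v tanh_half_pos[of 1] by (simp add: norm_radial_geodesic)
  then have "of_real (tanh_half 1) * (v + u) = 0"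
    using u v by (auto simp: radial_geodesic_def algebra_simps)
  then have vu: "v = - u"
    using tanh_half_pos[of 1] by (simp add: eq_neg_iff_add_eq_0)
  have "\<gamma> t = radial_geodesic u t" for t
  proof (cases "t \<ge> 0")
    case False
    then have "\<gamma> (- (- t)) = radial_geodesic v (- t)"
      using v(2)[rule_format, of "- t"] by simp
    then show ?thesis
      using vu by (simp add: radial_geodesic_def tanh_half_def)
  qed (use u in auto)
  then show ?thesis
    using u(1) by blast
qed

lemma geodesic_line_eq_geodesic_through:
  assumes g: "geodesic_line \<gamma>"
  obtains u where "cmod u = 1" "(\<lambda>t. \<gamma> (t + s)) = geodesic_through (\<gamma> s) u"
proof -
  have b: "cmod (\<gamma> s) < 1"
    by (rule geodesic_line_in_disk[OF g])
  have "geodesic_line (\<lambda>t. mobius (\<gamma> s) (\<gamma> (t + s)))"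
    by (rule geodesic_line_mobius[OF b geodesic_line_shift[OF g]])
  then obtain u where u: "cmod u = 1" "(\<lambda>t. mobius (\<gamma> s) (\<gamma> (t + s))) = radial_geodesic u"
    using geodesic_line_from_0 by force
  have "\<gamma> (t + s) = geodesic_through (\<gamma> s) u t" for t
    using mobius_inverse[OF b, of "\<gamma> (t + s)"] geodesic_line_in_disk[OF g, of "t + s"]
      fun_cong[OF u(2), of t] by (simp add: geodesic_through_def)
  then show ?thesis
    using that u(1) by blast
qed

lemma geodesic_line_endpoints:
  assumes g: "geodesic_line \<gamma>" and p: "(\<gamma> \<longlongrightarrow> p) at_bot" and q: "(\<gamma> \<longlongrightarrow> q) at_top"
  obtains u where "cmod u = 1" "(\<lambda>t. \<gamma> (t + s)) = geodesic_through (\<gamma> s) u"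
    "p = mobius (- \<gamma> s) (- u)" "q = mobius (- \<gamma> s) u"
proof -
  obtain u where u: "cmod u = 1" "(\<lambda>t. \<gamma> (t + s)) = geodesic_through (\<gamma> s) u"
    using geodesic_line_eq_geodesic_through[OF g] by metis
  have b: "cmod (\<gamma> s) < 1"
    by (rule geodesic_line_in_disk[OF g])
  have "(geodesic_through (\<gamma> s) u \<longlongrightarrow> p) at_bot"
    unfolding u(2)[symmetric] by (rule tendsto_at_bot_shift[OF p])
  then have "p = mobius (- \<gamma> s) (- u)"
    using tendsto_unique[OF _ _ geodesic_through_at_bot[OF b u(1)]] by simp
  have "(geodesic_through (\<gamma> s) u \<longlongrightarrow> q) at_top"
    unfolding u(2)[symmetric] by (rule tendsto_at_top_shift[OF q])
  then have "q = mobius (- \<gamma> s) u"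
    using tendsto_unique[OF _ _ geodesic_through_at_top[OF b u(1)]] by simp
  with \<open>p = mobius (- \<gamma> s) (- u)\<close> show ?thesis
    using that u by blast
qed

lemma mobius_endpoints_antipodal:
  assumes g: "geodesic_line \<gamma>" and p: "(\<gamma> \<longlongrightarrow> p) at_bot" and q: "(\<gamma> \<longlongrightarrow> q) at_top"
  shows "mobius (\<gamma> s) p = - mobius (\<gamma> s) q"
proof -
  obtain u where u: "cmod u = 1" "p = mobius (- \<gamma> s) (- u)" "q = mobius (- \<gamma> s) u"
    using geodesic_line_endpoints[OF g p q, of s] by metis
  show ?thesis
    using u mobius_inverse'[OF geodesic_line_in_disk[OF g]] by simp
qed

lemma on_diameter_if_mobius_antipodal:
  assumes x: "cmod x < 1" and u: "cmod u = 1" and anti: "mobius x (- u) = - mobius x u"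
  shows "\<exists>t. x = radial_geodesic u t"
proof -
  have nz: "1 - cnj x * (- u) \<noteq> 0" "1 - cnj x * u \<noteq> 0"
    using mobius_denom_nonzero[OF x, of "- u"] mobius_denom_nonzero[OF x, of u] u by auto
  have "(- u - x) / (1 - cnj x * (- u)) = - ((u - x) / (1 - cnj x * u))"
    using anti unfolding mobius_def by simp
  then have "(- u - x) * (1 - cnj x * u) = - ((u - x) * (1 - cnj x * (- u)))"
    using nz by (simp add: divide_simps) (simp add: algebra_simps)
  then have x_eq: "x = cnj x * u * u"
    by (simp add: algebra_simps)
  have uu: "u * cnj u = 1"
    using u complex_norm_square[of u] by simp
  define w where "w = x * cnj u"
  have "w = cnj x * u * (u * cnj u)"
    unfolding w_def by (subst x_eq) (simp add: algebra_simps)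
  then have "Im w = 0"
    unfolding uu w_def by (metis complex_cnj_cancel_iff complex_eq_iff complex_cnj_zero_iff
        cnj.simps(2) neg_equal_zero complex_cnj_mult complex_cnj_cnj mult_1_right)
  then have w_real: "w = of_real (Re w)"
    by (simp add: complex_eq_iff)
  have x_w: "x = w * u"
    unfolding w_def using uu by (simp add: mult.assoc mult.commute[of "cnj u"])
  have "\<bar>Re w\<bar> < 1"
    using x u abs_Re_le_cmod[of w] unfolding w_def by (simp add: norm_mult)
  then have "x = radial_geodesic u (2 * artanh (Re w))"
    unfolding radial_geodesic_def tanh_half_double_artanh[OF \<open>\<bar>Re w\<bar> < 1\<close>]
    by (metis x_w w_real)
  then show ?thesis ..
qed

lemma geod_eq_range:
  assumes d: "geodesic_line \<delta>" and p: "(\<delta> \<longlongrightarrow> p) at_bot" and q: "(\<delta> \<longlongrightarrow> q) at_top"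
  shows "geod p q = range \<delta>"
proof
  show "range \<delta> \<subseteq> geod p q"
    unfolding geod_def using assms by blast
  show "geod p q \<subseteq> range \<delta>"
  proof
    fix z assume "z \<in> geod p q"
    then obtain \<delta>' s where d': "geodesic_line \<delta>'" "(\<delta>' \<longlongrightarrow> p) at_bot" "(\<delta>' \<longlongrightarrow> q) at_top"
      and z: "z = \<delta>' s"
      unfolding geod_def by blast
    define c where "c = \<delta> 0"
    have c: "cmod c < 1"
      unfolding c_def by (rule geodesic_line_in_disk[OF d])
    obtain u where u: "cmod u = 1" "(\<lambda>t. \<delta> (t + 0)) = geodesic_through c u"
      "p = mobius (- c) (- u)" "q = mobius (- c) u"
      using geodesic_line_endpoints[OF d p q, of 0] unfolding c_def by metis
    text \<open>Moving \<open>c\<close> to the origin turns \<open>\<delta>\<close> into the diameter through \<open>u\<close>, and the image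
      of \<open>\<delta>'\<close> runs from \<open>- u\<close> to \<open>u\<close>.\<close>
    define e where "e = (\<lambda>t. mobius c (\<delta>' t))"
    have e: "geodesic_line e"
      unfolding e_def by (rule geodesic_line_mobius[OF c d'(1)])
    have "mobius c p = - u" "mobius c q = u"
      using u(1,3,4) mobius_inverse'[OF c] by simp_all
    moreover have "cmod p = 1" "cmod q = 1"
      using u(1,3,4) norm_mobius_eq_1[of "- c"] c by auto
    ultimately have "(e \<longlongrightarrow> - u) at_bot" "(e \<longlongrightarrow> u) at_top"
      unfolding e_def using tendsto_mobius[OF tendsto_const d'(2), of c]
        tendsto_mobius[OF tendsto_const d'(3), of c] c by auto
    then have "mobius (e s) (- u) = - mobius (e s) u"
      by (rule mobius_endpoints_antipodal[OF e])
    then obtain t where t: "e s = radial_geodesic u t"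
      using on_diameter_if_mobius_antipodal[OF geodesic_line_in_disk[OF e] u(1)] by blast
    have "z = mobius (- c) (e s)"
      unfolding e_def z using mobius_inverse[OF c] geodesic_line_in_disk[OF d'(1), of s] by simp
    also have "\<dots> = \<delta> t"
      using fun_cong[OF u(2), of t] t by (simp add: geodesic_through_def)
    finally show "z \<in> range \<delta>"
      by simp
  qed
qed

lemma radial_geodesic_1_eq:
  assumes u: "cmod u = 1" and v: "cmod v = 1" and eq: "radial_geodesic v 1 = radial_geodesic u t"
  shows "v = u \<or> v = - u"
proof -
  have "\<bar>tanh_half t\<bar> = tanh_half \<bar>t\<bar>"
    unfolding tanh_half_def using tanh_real_abs[of "t / 2"] by simp
  then have "tanh_half 1 = tanh_half \<bar>t\<bar>"
    using arg_cong[OF eq, of cmod] norm_radial_geodesic[OF u, of t] norm_radial_geodesic[OF v, of 1]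
      tanh_half_pos[of 1] by simp
  then have "t = 1 \<or> t = - 1"
    unfolding tanh_half_def by auto
  moreover have nz: "complex_of_real (tanh_half 1) \<noteq> 0"
    using tanh_half_pos[of 1] by simp
  ultimately show ?thesis
  proof (elim disjE)
    assume "t = 1"
    then show ?thesis
      using eq nz by (simp add: radial_geodesic_def)
  next
    assume "t = - 1"
    then have "of_real (tanh_half 1) * v = of_real (tanh_half 1) * (- u)"
      using eq by (simp add: radial_geodesic_def tanh_half_def)
    then show ?thesis
      using mult_cancel_left[of "of_real (tanh_half 1)" v "- u"] nz by blast
  qed
qed

lemma endpoints_eq_if_range_subset:
  assumes g: "geodesic_line \<gamma>" and d: "geodesic_line \<delta>" and sub: "range \<delta> \<subseteq> range \<gamma>"
    and dp: "(\<delta> \<longlongrightarrow> p) at_bot" and dq: "(\<delta> \<longlongrightarrow> q) at_top"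
    and ga: "(\<gamma> \<longlongrightarrow> a) at_bot" and gb: "(\<gamma> \<longlongrightarrow> b) at_top"
  shows "(p = a \<and> q = b) \<or> (p = b \<and> q = a)"
proof -
  obtain s0 where s0: "\<delta> 0 = \<gamma> s0"
    using sub by auto
  obtain s1 where s1: "\<delta> 1 = \<gamma> s1"
    using sub by auto
  obtain w where w: "cmod w = 1" "(\<lambda>t. \<gamma> (t + s0)) = geodesic_through (\<gamma> s0) w"
    "a = mobius (- \<gamma> s0) (- w)" "b = mobius (- \<gamma> s0) w"
    using geodesic_line_endpoints[OF g ga gb, of s0] by metis
  obtain v where v: "cmod v = 1" "(\<lambda>t. \<delta> (t + 0)) = geodesic_through (\<delta> 0) v"
    "p = mobius (- \<delta> 0) (- v)" "q = mobius (- \<delta> 0) v"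
    using geodesic_line_endpoints[OF d dp dq, of 0] by metis
  have c: "cmod (\<gamma> s0) < 1"
    by (rule geodesic_line_in_disk[OF g])
  have "geodesic_through (\<gamma> s0) v 1 = geodesic_through (\<gamma> s0) w (s1 - s0)"
    using fun_cong[OF v(2), of 1] fun_cong[OF w(2), of "s1 - s0"] s0 s1 by simp
  then have "radial_geodesic v 1 = radial_geodesic w (s1 - s0)"
    using mobius_geodesic_through[OF c v(1), of 1] mobius_geodesic_through[OF c w(1), of "s1 - s0"]
    by metis
  then have "v = w \<or> v = - w"
    by (rule radial_geodesic_1_eq[OF w(1) v(1)])
  then show ?thesis
    using v(3,4) w(3,4) s0 by auto
qed

definition leaf_ends :: "(complex \<times> complex) measure \<Rightarrow> (complex \<times> complex) set" where
  "leaf_ends L = {(p, q). (p, q) \<in> msupp L \<inter> pos_pairs \<or> (q, p) \<in> msupp L \<inter> pos_pairs}"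

lemma range_in_leaves_iff:
  assumes g: "geodesic_line \<gamma>" and p: "(\<gamma> \<longlongrightarrow> p) at_bot" and q: "(\<gamma> \<longlongrightarrow> q) at_top"
  shows "range \<gamma> \<in> leaves L \<longleftrightarrow> (p, q) \<in> leaf_ends L"
proof
  assume "range \<gamma> \<in> leaves L"
  then obtain p' q' where eq: "range \<gamma> = geod p' q'" and pq': "(p', q') \<in> msupp L \<inter> pos_pairs"
    unfolding leaves_def by blast
  have "\<gamma> 0 \<in> geod p' q'"
    using eq by auto
  then obtain \<delta> where d: "geodesic_line \<delta>" "(\<delta> \<longlongrightarrow> p') at_bot" "(\<delta> \<longlongrightarrow> q') at_top"
    unfolding geod_def by blast
  then have "range \<delta> \<subseteq> range \<gamma>"
    using eq geod_eq_range by simp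
  then have "(p' = p \<and> q' = q) \<or> (p' = q \<and> q' = p)"
    using endpoints_eq_if_range_subset[OF g d(1) _ d(2,3) p q] by blast
  then show "(p, q) \<in> leaf_ends L"
    using pq' unfolding leaf_ends_def by auto
next
  have rev: "geodesic_line (\<lambda>t. \<gamma> (- t))" "((\<lambda>t. \<gamma> (- t)) \<longlongrightarrow> q) at_bot"
    "((\<lambda>t. \<gamma> (- t)) \<longlongrightarrow> p) at_top"
    using geodesic_line_reverse[OF g] q p filterlim_at_top_mirror filterlim_at_bot_mirror by auto
  have "range (\<lambda>t. \<gamma> (- t)) = range \<gamma>"
  proof (intro equalityI subsetI)
    fix z
    assume "z \<in> range \<gamma>"
    then obtain t where "z = \<gamma> t"
      by auto
    then show "z \<in> range (\<lambda>t. \<gamma> (- t))"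
      using rangeI[of "\<lambda>t. \<gamma> (- t)" "- t"] by simp
  qed auto
  assume "(p, q) \<in> leaf_ends L"
  then have "geod p q \<in> leaves L \<or> geod q p \<in> leaves L"
    unfolding leaf_ends_def leaves_def by blast
  then show "range \<gamma> \<in> leaves L"
    using geod_eq_range[OF g p q] geod_eq_range[OF rev] \<open>range (\<lambda>t. \<gamma> (- t)) = range \<gamma>\<close> by auto
qed

section \<open>Visual distance\<close>

text \<open>\<open>mobius ob\<close> moves \<open>ob\<close> to the origin, where the rays from \<open>ob\<close> become radii.\<close>

definition visual_dir :: "complex \<Rightarrow> complex \<Rightarrow> complex" where
  "visual_dir ob x = mobius ob x / of_real (cmod (mobius ob x))"

definition ray_target :: "complex \<Rightarrow> complex \<Rightarrow> bool" where
  "ray_target ob x \<longleftrightarrow> cmod x = 1 \<or> (cmod x < 1 \<and> x \<noteq> ob)"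

lemma mobius_eq_0_imp: "cmod c < 1 \<Longrightarrow> cmod x \<le> 1 \<Longrightarrow> mobius c x = 0 \<Longrightarrow> x = c"
  unfolding mobius_def using mobius_denom_nonzero[of c x] by simp

lemma ray_target_mobius:
  assumes ob: "cmod ob < 1" and x: "ray_target ob x"
  shows "cmod x \<le> 1" "mobius ob x \<noteq> 0" "cmod (mobius ob x) \<le> 1"
proof -
  show x1: "cmod x \<le> 1"
    using x unfolding ray_target_def by auto
  show "mobius ob x \<noteq> 0"
    using mobius_eq_0_imp[OF ob x1] x ob unfolding ray_target_def by auto
  show "cmod (mobius ob x) \<le> 1"
    using x norm_mobius_eq_1[OF ob] norm_mobius_less_1[OF ob] unfolding ray_target_def
    by (metis less_imp_le order_refl)
qed

lemma norm_visual_dir: "cmod ob < 1 \<Longrightarrow> ray_target ob x \<Longrightarrow> cmod (visual_dir ob x) = 1"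
  unfolding visual_dir_def using ray_target_mobius by (simp add: norm_divide)

lemma visual_dir_boundary: "cmod ob < 1 \<Longrightarrow> cmod a = 1 \<Longrightarrow> visual_dir ob a = mobius ob a"
  unfolding visual_dir_def by (simp add: norm_mobius_eq_1)

lemma norm_mobius_eq_tanh_half_hdist:
  "cmod ob < 1 \<Longrightarrow> cmod b < 1 \<Longrightarrow> cmod (mobius ob b) = tanh_half (hdist ob b)"
  using norm_eq_tanh_half_hdist_0[of "mobius ob b"] hdist_mobius[of ob ob b]
  by (simp add: norm_mobius_less_1)

lemma geod_ray_geodesic_through_visual_dir:
  assumes ob: "cmod ob < 1" and x: "ray_target ob x"
  shows "geod_ray ob x (geodesic_through ob (visual_dir ob x))"
proof -
  let ?d = "visual_dir ob x"
  have d: "cmod ?d = 1"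
    by (rule norm_visual_dir[OF ob x])
  have g: "geodesic_line (geodesic_through ob ?d)"
    by (rule geodesic_line_geodesic_through[OF ob d])
  have "x \<in> geodesic_through ob ?d ` {0..} \<or> (geodesic_through ob ?d \<longlongrightarrow> x) at_top"
  proof (cases "cmod x = 1")
    case True
    then have "?d = mobius ob x"
      by (rule visual_dir_boundary[OF ob])
    then have "(geodesic_through ob ?d \<longlongrightarrow> mobius (- ob) (mobius ob x)) at_top"
      using geodesic_through_at_top[OF ob d] by simp
    then show ?thesis
      using mobius_inverse[OF ob, of x] True by simp
  next
    case False
    then have x1: "cmod x < 1"
      using x unfolding ray_target_def by auto
    define t0 where "t0 = hdist ob x"
    have t0: "t0 \<ge> 0"
      unfolding t0_def using hdist_nonneg ob x1 by simp
    have m: "cmod (mobius ob x) = tanh_half t0"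
      unfolding t0_def by (rule norm_mobius_eq_tanh_half_hdist[OF ob x1])
    moreover have "tanh_half t0 \<noteq> 0"
      using m ray_target_mobius(2)[OF ob x] by auto
    ultimately have "radial_geodesic ?d t0 = mobius ob x"
      by (simp add: radial_geodesic_def visual_dir_def)
    then have "geodesic_through ob ?d t0 = x"
      unfolding geodesic_through_def using mobius_inverse[OF ob] x1 by simp
    then show ?thesis
      using t0 by (metis atLeast_iff image_eqI)
  qed
  then show ?thesis
    using g unfolding geod_ray_def geodesic_line_def by simp
qed

lemma visual_dir_eq_if_geod_ray:
  assumes ob: "cmod ob < 1" and x: "ray_target ob x" and r: "geod_ray ob x \<rho>"
    and u: "cmod u = 1" "\<forall>t\<ge>0. mobius ob (\<rho> t) = radial_geodesic u t"
  shows "u = visual_dir ob x"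
proof -
  have "x \<in> \<rho> ` {0..} \<or> (\<rho> \<longlongrightarrow> x) at_top"
    using r unfolding geod_ray_def by blast
  then show ?thesis
  proof
    assume "x \<in> \<rho> ` {0..}"
    then obtain t0 where t0: "t0 \<ge> 0" "x = \<rho> t0"
      by auto
    then have "t0 \<noteq> 0"
      using x r ob unfolding ray_target_def geod_ray_def by auto
    then have "tanh_half t0 > 0"
      using t0 tanh_half_pos by simp
    moreover have "mobius ob x = of_real (tanh_half t0) * u"
      using u(2) t0 by (simp add: radial_geodesic_def)
    ultimately show ?thesis
      unfolding visual_dir_def using u(1) by (simp add: norm_mult)
  next
    assume lim: "(\<rho> \<longlongrightarrow> x) at_top"
    have "((\<lambda>t. mobius ob (\<rho> t)) \<longlongrightarrow> mobius ob x) at_top"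
      by (rule tendsto_mobius[OF tendsto_const lim ob ray_target_mobius(1)[OF ob x]])
    moreover have "((\<lambda>t. mobius ob (\<rho> t)) \<longlongrightarrow> u) at_top"
    proof (rule Lim_transform_eventually[OF radial_geodesic_at_top[of u]])
      show "\<forall>\<^sub>F t in at_top. radial_geodesic u t = mobius ob (\<rho> t)"
        using u(2) by (auto simp: eventually_at_top_linorder intro!: exI[of _ 0])
    qed
    ultimately have "mobius ob x = u"
      using tendsto_unique by force
    then show ?thesis
      unfolding visual_dir_def using u(1) by simp
  qed
qed

lemma geod_ray_unique:
  assumes ob: "cmod ob < 1" and x: "ray_target ob x" and r: "geod_ray ob x \<rho>"
  shows "\<forall>t\<ge>0. \<rho> t = geodesic_through ob (visual_dir ob x) t"
proof -
  have start: "\<rho> 0 = ob" and disk: "\<And>t. t \<ge> 0 \<Longrightarrow> cmod (\<rho> t) < 1"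
    and isom: "\<And>s t. s \<ge> 0 \<Longrightarrow> t \<ge> 0 \<Longrightarrow> hdist (\<rho> s) (\<rho> t) = \<bar>s - t\<bar>"
    using r unfolding geod_ray_def hdisk_def by auto
  obtain u where u: "cmod u = 1" "\<forall>t\<ge>0. mobius ob (\<rho> t) = radial_geodesic u t"
    using geodesic_ray_from_0[of "\<lambda>t. mobius ob (\<rho> t)"] start disk isom norm_mobius_less_1[OF ob]
      hdist_mobius[OF ob] by force
  moreover have "\<rho> t = mobius (- ob) (mobius ob (\<rho> t))" if "t \<ge> 0" for t
    using mobius_inverse[OF ob, of "\<rho> t"] disk[OF that] by simp
  ultimately show ?thesis
    using visual_dir_eq_if_geod_ray[OF ob x r u] unfolding geodesic_through_def by simp
qed

lemma geodesic_through_has_vector_derivative: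
  assumes ob: "cmod ob < 1" and d: "cmod d = 1"
  shows "(geodesic_through ob d has_vector_derivative (of_real ((1 - (cmod ob)\<^sup>2) / 2) * d)) (at 0)"
proof -
  have "(tanh_half has_field_derivative (1/2)) (at 0)"
    unfolding tanh_half_def[abs_def] by (rule derivative_eq_intros refl | simp)+
  then have th: "((\<lambda>t. of_real (tanh_half t) :: complex) has_vector_derivative of_real (1/2)) (at 0)"
    by (rule has_vector_derivative_of_real)
  let ?g = "\<lambda>z. (z * d + ob) / (1 + cnj ob * (z * d))"
  have "(?g has_field_derivative (d - ob * (cnj ob * d))) (at 0)"
    by (rule derivative_eq_intros refl | simp)+
  then have D: "((?g \<circ> (\<lambda>t. of_real (tanh_half t))) has_vector_derivative
      (of_real (1/2) * (d - ob * (cnj ob * d)))) (at 0)"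
    by (intro field_vector_diff_chain_at[OF th]) simp
  have E: "?g \<circ> (\<lambda>t. of_real (tanh_half t)) = geodesic_through ob d"
    by (auto simp: geodesic_through_def radial_geodesic_def mobius_def)
  have A: "of_real (1/2) * (d - ob * (cnj ob * d)) = of_real ((1 - (cmod ob)\<^sup>2) / 2) * d"
    using complex_norm_square[of ob] by (simp add: algebra_simps)
  show ?thesis
    using D unfolding E A .
qed

lemma vec_angle_scale:
  assumes "\<alpha> > 0"
  shows "vec_angle (of_real \<alpha> * a) (of_real \<alpha> * b) = vec_angle a b"
proof -
  have "Re (of_real \<alpha> * a * cnj (of_real \<alpha> * b)) = \<alpha> * \<alpha> * Re (a * cnj b)"
    by (simp add: algebra_simps)
  moreover have "cmod (of_real \<alpha> * a) * cmod (of_real \<alpha> * b) = \<alpha> * \<alpha> * (cmod a * cmod b)"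
    using assms by (simp add: norm_mult algebra_simps)
  ultimately show ?thesis
    unfolding vec_angle_def using assms by simp
qed

lemma vector_derivative_of_geod_ray:
  assumes ob: "cmod ob < 1" and x: "ray_target ob x" and r: "geod_ray ob x \<rho>"
    and D: "(\<rho> has_vector_derivative u) (at 0 within {0..})"
  shows "u = of_real ((1 - (cmod ob)\<^sup>2) / 2) * visual_dir ob x"
proof -
  have "at (0::real) within {0..} \<noteq> bot"
    using trivial_limit_at_right_real[of 0] at_le[of "{0<..}" "{0..}" 0]
    by (metis atLeast_iff greaterThan_iff less_imp_le subsetI bot_unique)
  moreover have "(\<rho> has_vector_derivative (of_real ((1 - (cmod ob)\<^sup>2) / 2) * visual_dir ob x))
      (at 0 within {0..})"
    by (rule has_vector_derivative_transform_within[OF has_vector_derivative_at_within[OF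
          geodesic_through_has_vector_derivative[OF ob norm_visual_dir[OF ob x]]], of 1])
       (use geod_ray_unique[OF ob x r] in auto)
  ultimately show ?thesis
    using vector_derivative_unique_within[OF _ D] by blast
qed

lemma visual_dist_eq_vec_angle:
  assumes ob: "cmod ob < 1" and x: "ray_target ob x" and y: "ray_target ob y"
  shows "visual_dist ob x y = vec_angle (visual_dir ob x) (visual_dir ob y)"
proof -
  let ?a = "(1 - (cmod ob)\<^sup>2) / 2"
  have a: "?a > 0"
    using one_minus_norm_sq_pos[OF ob] by simp
  show ?thesis
    unfolding visual_dist_def
  proof (rule the_equality)
    show "\<exists>\<rho>1 \<rho>2 u v. geod_ray ob x \<rho>1 \<and> geod_ray ob y \<rho>2 \<and>
      (\<rho>1 has_vector_derivative u) (at 0 within {0..}) \<and>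
      (\<rho>2 has_vector_derivative v) (at 0 within {0..}) \<and>
      vec_angle (visual_dir ob x) (visual_dir ob y) = vec_angle u v"
      using geod_ray_geodesic_through_visual_dir[OF ob x] geod_ray_geodesic_through_visual_dir[OF ob y]
        has_vector_derivative_at_within[OF geodesic_through_has_vector_derivative[OF ob norm_visual_dir[OF ob x]]]
        has_vector_derivative_at_within[OF geodesic_through_has_vector_derivative[OF ob norm_visual_dir[OF ob y]]]
        vec_angle_scale[OF a] by metis
  next
    fix \<theta>
    assume "\<exists>\<rho>1 \<rho>2 u v. geod_ray ob x \<rho>1 \<and> geod_ray ob y \<rho>2 \<and>
      (\<rho>1 has_vector_derivative u) (at 0 within {0..}) \<and>
      (\<rho>2 has_vector_derivative v) (at 0 within {0..}) \<and> \<theta> = vec_angle u v"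
    then show "\<theta> = vec_angle (visual_dir ob x) (visual_dir ob y)"
      using vector_derivative_of_geod_ray[OF ob x] vector_derivative_of_geod_ray[OF ob y]
        vec_angle_scale[OF a] by metis
  qed
qed

lemma norm_diff_le_vec_angle:
  assumes u: "cmod u = 1" and v: "cmod v = 1"
  shows "cmod (u - v) \<le> vec_angle u v"
proof -
  let ?c = "Re (u * cnj v)"
  have c: "\<bar>?c\<bar> \<le> 1"
    using abs_Re_le_cmod[of "u * cnj v"] u v by (simp add: norm_mult)
  define \<theta> where "\<theta> = vec_angle u v"
  have \<theta>: "\<theta> = arccos ?c"
    unfolding \<theta>_def vec_angle_def using u v by simp
  have "(cmod (u - v))\<^sup>2 = 2 - 2 * cos \<theta>"
    using u v cos_arccos_abs[OF c] by (simp add: \<theta> norm_diff_sq)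
  also have "\<dots> = 4 * (sin (\<theta> / 2))\<^sup>2"
    using cos_double_sin[of "\<theta> / 2"] by simp
  also have "\<dots> \<le> 4 * (\<theta> / 2)\<^sup>2"
    using power_mono[OF abs_sin_x_le_abs_x abs_ge_zero, of "\<theta> / 2" 2] by (simp add: power_divide)
  also have "\<dots> = \<theta>\<^sup>2"
    by (simp add: power2_eq_square)
  finally show ?thesis
    using power2_le_imp_le arccos_lbound c \<theta> \<theta>_def by auto
qed

lemma norm_visual_dir_diff_le_visual_dist:
  assumes "cmod ob < 1" "ray_target ob x" "ray_target ob y"
  shows "cmod (visual_dir ob x - visual_dir ob y) \<le> visual_dist ob x y"
  using assms by (simp add: visual_dist_eq_vec_angle norm_diff_le_vec_angle norm_visual_dir)

section \<open>Transverse measure of leaf segments\<close>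

lemma open_compl_msupp: "open (- msupp M)"
proof (rule Topological_Spaces.openI)
  fix x
  assume "x \<in> - msupp M"
  then obtain U where U: "open U" "x \<in> U" "\<not> emeasure M U > 0"
    unfolding msupp_def by blast
  then have "U \<subseteq> - msupp M"
    unfolding msupp_def by auto
  then show "\<exists>T. open T \<and> x \<in> T \<and> T \<subseteq> - msupp M"
    using U by blast
qed

lemma closed_msupp: "closed (msupp M)"
  unfolding closed_def by (rule open_compl_msupp)

text \<open>By Lindelof, the complement of the support is a countable union of open null sets.\<close>

lemma emeasure_compl_msupp:
  fixes M :: "'a::second_countable_topology measure"
  assumes sets_M: "sets M = sets borel"
  shows "emeasure M (- msupp M) = 0"
proof -
  define \<F> where "\<F> = {U. open U \<and> emeasure M U = 0}"
  have "\<Union>\<F> = - msupp M"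
    unfolding \<F>_def msupp_def by auto
  moreover obtain \<F>' where \<F>': "\<F>' \<subseteq> \<F>" "countable \<F>'" "\<Union>\<F>' = \<Union>\<F>"
    using Lindelof[of \<F>] unfolding \<F>_def by blast
  moreover have "(\<Union>U\<in>\<F>'. id U) \<in> null_sets M"
    by (rule null_sets_UN'[OF \<F>'(2)]) (use \<F>'(1) sets_M borel_open in \<open>auto simp: \<F>_def intro: null_setsI\<close>)
  ultimately have "- msupp M \<in> null_sets M"
    by simp
  then show ?thesis
    by (rule null_setsD1)
qed

lemma inum_eq_0_if_subset_leaf:
  assumes ml: "measured_lamination M" and L: "L \<in> leaves M" and sub: "\<sigma> \<subseteq> L"
  shows "inum \<sigma> M = 0"
proof -
  have sets_M: "sets M = sets borel"
    and disj: "\<forall>F\<in>leaves M. \<forall>G\<in>leaves M. F \<noteq> G \<longrightarrow> F \<inter> G = {}"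
    using ml unfolding measured_lamination_def by auto
  text \<open>A leaf crossing \<open>\<sigma>\<close> transversally would meet the leaf \<open>L\<close> without being equal to it.\<close>
  have "{(p, q) \<in> pos_pairs. geod p q \<inter> \<sigma> \<noteq> {} \<and> \<not> \<sigma> \<subseteq> geod p q} \<subseteq> - msupp M"
  proof
    fix x
    assume x: "x \<in> {(p, q) \<in> pos_pairs. geod p q \<inter> \<sigma> \<noteq> {} \<and> \<not> \<sigma> \<subseteq> geod p q}"
    obtain p q where x_eq: "x = (p, q)"
      by fastforce
    show "x \<in> - msupp M"
    proof
      assume "x \<in> msupp M"
      then have "geod p q \<in> leaves M" "geod p q \<noteq> L" "geod p q \<inter> L \<noteq> {}"
        using x x_eq sub unfolding leaves_def by auto
      then show False
        using disj L by blast
    qed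
  qed
  then have "inum \<sigma> M \<le> emeasure M (- msupp M)"
    unfolding inum_def by (rule emeasure_mono) (use sets_M borel_open[OF open_compl_msupp] in simp)
  then show ?thesis
    using emeasure_compl_msupp[OF sets_M] by simp
qed

lemma hseg_subset_range:
  assumes g: "geodesic_line \<gamma>" and c: "c > 0"
  shows "hseg (\<gamma> 0) (\<gamma> c) \<subseteq> range \<gamma>"
proof
  fix z
  assume z: "z \<in> hseg (\<gamma> 0) (\<gamma> c)"
  define b where "b = \<gamma> 0"
  have b: "cmod b < 1"
    unfolding b_def by (rule geodesic_line_in_disk[OF g])
  obtain u where u: "cmod u = 1" "(\<lambda>t. \<gamma> (t + 0)) = geodesic_through b u"
    using geodesic_line_eq_geodesic_through[OF g] unfolding b_def by metis
  then have \<gamma>: "\<gamma> = geodesic_through b u"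
    by simp
  have zd: "cmod z < 1" and sum: "hdist b z + hdist z (\<gamma> c) = hdist b (\<gamma> c)"
    using z unfolding hseg_def hdisk_def b_def by auto
  let ?z = "mobius b z" and ?y = "radial_geodesic u c"
  have mz: "cmod ?z < 1"
    by (rule norm_mobius_less_1[OF b zd])
  have gc: "cmod (\<gamma> c) < 1"
    by (rule geodesic_line_in_disk[OF g])
  have y: "mobius b (\<gamma> c) = ?y"
    unfolding \<gamma> by (rule mobius_geodesic_through[OF b u(1)])
  have "hdist 0 ?z + hdist ?z ?y = hdist 0 ?y"
    using sum hdist_mobius[OF b b zd] hdist_mobius[OF b zd gc] hdist_mobius[OF b b gc] y by simp
  then have "?z = of_real (cmod ?z / cmod ?y) * ?y"
    by (rule eq_scaled_if_hdist_add)
      (use mz radial_geodesic_in_disk[OF u(1)] tanh_half_pos[OF c] u(1) in \<open>auto simp: radial_geodesic_def\<close>)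
  then have "?z = of_real (cmod ?z) * u"
    using tanh_half_pos[OF c] u(1) by (simp add: radial_geodesic_def norm_mult)
  also have "\<dots> = radial_geodesic u (2 * artanh (cmod ?z))"
    using mz by (simp add: radial_geodesic_def tanh_half_double_artanh)
  finally have "z = geodesic_through b u (2 * artanh (cmod ?z))"
    unfolding geodesic_through_def using mobius_inverse[OF b, of z] zd by (metis less_imp_le)
  then show "z \<in> range \<gamma>"
    unfolding \<gamma> by simp
qed

lemma strongly_fill_no_common_leaf:
  assumes mlm: "measured_lamination Lm" and mlp: "measured_lamination Lp"
    and sf: "strongly_fill Lm Lp" and g: "geodesic_line \<gamma>"
    and lm: "range \<gamma> \<in> leaves Lm" and lp: "range \<gamma> \<in> leaves Lp"
  shows False
proof -
  obtain c where c: "c > 0" and fill: "\<forall>x\<in>hdisk. \<forall>y\<in>hdisk. hdist x y \<ge> c \<longrightarrow>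
      inum (hseg x y) Lm + inum (hseg x y) Lp \<ge> ennreal 1"
    using sf unfolding strongly_fill_def by (meson zero_less_one)
  have "\<gamma> 0 \<in> hdisk" "\<gamma> c \<in> hdisk" "hdist (\<gamma> 0) (\<gamma> c) = c"
    using g c unfolding geodesic_line_def by auto
  then have "inum (hseg (\<gamma> 0) (\<gamma> c)) Lm + inum (hseg (\<gamma> 0) (\<gamma> c)) Lp \<ge> ennreal 1"
    using fill by auto
  moreover have "inum (hseg (\<gamma> 0) (\<gamma> c)) Lm = 0" "inum (hseg (\<gamma> 0) (\<gamma> c)) Lp = 0"
    using inum_eq_0_if_subset_leaf[OF mlm lm hseg_subset_range[OF g c]]
      inum_eq_0_if_subset_leaf[OF mlp lp hseg_subset_range[OF g c]] by auto
  ultimately show False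
    by simp
qed

section \<open>The compact space of leaves through a circle\<close>

lemma Arg_pos_iff_norm_1:
  assumes "cmod z = 1"
  shows "0 < Arg z \<longleftrightarrow> z \<noteq> 1 \<and> 0 \<le> Im z"
proof (cases "Im z = 0")
  case True
  then have "\<bar>Re z\<bar> = 1"
    using assms by (simp add: cmod_def)
  then have "Re z = 1 \<or> Re z = - 1"
    by auto
  then show ?thesis
    using True Arg_pos_iff[of z] by (auto simp: complex_eq_iff)
next
  case False
  then show ?thesis
    using Arg_pos_iff[of z] by (auto simp: complex_eq_iff)
qed

lemma pos_pairs_eq: "pos_pairs = {(p, q). cmod p = 1 \<and> cmod q = 1 \<and> p \<noteq> q \<and> 0 \<le> Im (q * cnj p)}"
proof -
  have "0 < Arg (q / p) \<longleftrightarrow> p \<noteq> q \<and> 0 \<le> Im (q * cnj p)" if "cmod p = 1" "cmod q = 1" for p q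
  proof -
    have "p * cnj p = 1"
      using that(1) complex_norm_square[of p] by simp
    then have "q * cnj p = 1 \<longleftrightarrow> p = q"
      by (metis mult.commute mult.left_commute mult_1_right)
    moreover have "cmod (q * cnj p) = 1"
      using that by (simp add: norm_mult)
    ultimately show ?thesis
      using Arg_pos_iff_norm_1[of "q * cnj p"] divide_conv_cnj[OF that(1), of q] by auto
  qed
  then show ?thesis
    unfolding pos_pairs_def by auto
qed

text \<open>Leaf endpoints can only degenerate onto the diagonal: the closure of \<open>pos_pairs\<close> only adds
  pairs \<open>(p, p)\<close>.\<close>

lemma leaf_ends_limit:
  assumes X: "\<And>k. X k \<in> leaf_ends L" and lim: "X \<longlonglongrightarrow> (p, q)" and pq: "p \<noteq> q"
  shows "(p, q) \<in> leaf_ends L"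
proof -
  define C where "C = {x. cmod (fst x) = 1 \<and> cmod (snd x) = 1 \<and> 0 \<le> Im (snd x * cnj (fst x))}"
  define S where "S = (msupp L \<inter> C) \<union> ((\<lambda>x. (snd x, fst x)) -` (msupp L \<inter> C) \<inter> UNIV)"
  have "closed C"
    unfolding C_def by (intro closed_Collect_conj closed_Collect_eq closed_Collect_le continuous_intros)
  then have "closed S"
    unfolding S_def using closed_msupp by (intro closed_Un closed_Int closed_vimage_Int continuous_intros) auto
  moreover have "leaf_ends L \<subseteq> S"
    unfolding leaf_ends_def S_def C_def pos_pairs_eq by auto
  ultimately have "(p, q) \<in> S"
    using closed_sequentially[OF _ _ lim] X by blast
  then show ?thesis
    using pq unfolding S_def C_def leaf_ends_def pos_pairs_eq by auto
qed

lemma mobius_minus_neq: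
  assumes b: "cmod b < 1" and w: "cmod w = 1"
  shows "mobius b (- w) \<noteq> mobius b w"
proof
  assume "mobius b (- w) = mobius b w"
  then have "- w = w"
    using mobius_inverse[OF b, of w] mobius_inverse[OF b, of "- w"] w by (metis norm_minus_cancel order_refl)
  then have "w = 0"
    by (simp add: complex_eq_iff)
  with w show False
    by simp
qed

lemma geodesic_through_in_leaves_iff:
  assumes b: "cmod b < 1" and w: "cmod w = 1"
  shows "range (geodesic_through b w) \<in> leaves L
    \<longleftrightarrow> (mobius (- b) (- w), mobius (- b) w) \<in> leaf_ends L"
  using range_in_leaves_iff[OF geodesic_line_geodesic_through[OF b w]
      geodesic_through_at_bot[OF b w] geodesic_through_at_top[OF b w]] .

text \<open>A leaf meeting the circle of radius \<open>r\<close> about \<open>ob\<close> at \<open>b\<close> is recorded by the position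
  \<open>v = mobius ob b\<close> of \<open>b\<close> seen from \<open>ob\<close> (so \<open>cmod v = tanh_half r\<close>) and the direction \<open>w\<close> of
  the leaf at \<open>b\<close>.\<close>

definition leaf_chart :: "complex \<Rightarrow> real \<Rightarrow> (complex \<times> complex) measure \<Rightarrow> (complex \<times> complex) set" where
  "leaf_chart ob R L =
    {(v, w). cmod v = R \<and> cmod w = 1 \<and> range (geodesic_through (mobius (- ob) v) w) \<in> leaves L}"

lemma closed_leaf_chart:
  assumes ob: "cmod ob < 1" and R: "R < 1"
  shows "closed (leaf_chart ob R L)"
  unfolding closed_sequential_limits
proof (intro allI impI, elim conjE)
  fix X l
  assume X: "\<forall>k. X k \<in> leaf_chart ob R L" and lim: "X \<longlonglongrightarrow> l"
  define V W where "V = (\<lambda>k. fst (X k))" and "W = (\<lambda>k. snd (X k))"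
  obtain v w where l: "l = (v, w)"
    by fastforce
  have V: "V \<longlonglongrightarrow> v" and W: "W \<longlonglongrightarrow> w"
    unfolding V_def W_def using tendsto_fst[OF lim] tendsto_snd[OF lim] l by auto
  have VW: "cmod (V k) = R" "cmod (W k) = 1"
    "range (geodesic_through (mobius (- ob) (V k)) (W k)) \<in> leaves L" for k
    using X unfolding leaf_chart_def V_def W_def by (auto simp: case_prod_beta)
  have v: "cmod v = R" and w: "cmod w = 1"
    using tendsto_norm[OF V] tendsto_norm[OF W] VW by (simp_all add: LIMSEQ_const_iff)
  have ob': "cmod (- ob) < 1"
    using ob by simp
  define b where "b = mobius (- ob) v"
  have b: "cmod b < 1" "cmod (- b) < 1"
    unfolding b_def using norm_mobius_less_1[OF ob'] v R by auto
  have B: "(\<lambda>k. - mobius (- ob) (V k)) \<longlonglongrightarrow> - b"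
    unfolding b_def by (intro tendsto_minus tendsto_mobius[OF tendsto_const V ob']) (use v R in simp)
  have "(mobius (- mobius (- ob) (V k)) (- W k), mobius (- mobius (- ob) (V k)) (W k))
      \<in> leaf_ends L" for k
    using VW geodesic_through_in_leaves_iff norm_mobius_less_1[OF ob'] R by (metis minus_minus)
  moreover have "(\<lambda>k. (mobius (- mobius (- ob) (V k)) (- W k), mobius (- mobius (- ob) (V k)) (W k)))
      \<longlonglongrightarrow> (mobius (- b) (- w), mobius (- b) w)"
    by (intro tendsto_Pair tendsto_mobius[OF B] tendsto_minus W b(2)) (use w in simp_all)
  moreover have "mobius (- b) (- w) \<noteq> mobius (- b) w"
    by (rule mobius_minus_neq[OF b(2) w])
  ultimately have "(mobius (- b) (- w), mobius (- b) w) \<in> leaf_ends L"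
    by (rule leaf_ends_limit)
  then show "l \<in> leaf_chart ob R L"
    unfolding l leaf_chart_def using geodesic_through_in_leaves_iff[OF b(1) w] v w b_def by simp
qed

lemma compact_leaf_chart:
  assumes ob: "cmod ob < 1" and R: "R < 1"
  shows "compact (leaf_chart ob R L)"
proof -
  have "leaf_chart ob R L \<subseteq> sphere 0 R \<times> sphere 0 1"
    unfolding leaf_chart_def by auto
  then show ?thesis
    using compact_Int_closed[OF compact_Times[OF compact_sphere compact_sphere] closed_leaf_chart[OF ob R]]
    by (metis inf.absorb_iff2)
qed

text \<open>The visual direction from \<open>ob\<close> of the endpoint at \<open>- \<infinity>\<close> of the leaf with chart
  coordinates \<open>(v, w)\<close>.\<close>

definition back_dir :: "complex \<Rightarrow> complex \<Rightarrow> complex \<Rightarrow> complex" where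
  "back_dir ob v w = mobius ob (mobius (- mobius (- ob) v) (- w))"

definition chart_gap :: "complex \<Rightarrow> (complex \<times> complex) \<times> (complex \<times> complex) \<Rightarrow> real" where
  "chart_gap ob c = (case c of ((v, w), (v', w')) \<Rightarrow>
     cmod (v - v') + cmod (back_dir ob v w - back_dir ob v' w'))"

lemma tendsto_back_dir:
  assumes ob: "cmod ob < 1" and V: "(V \<longlongrightarrow> v) F" and W: "(W \<longlongrightarrow> w) F"
    and v: "cmod v < 1" and w: "cmod w = 1"
  shows "((\<lambda>x. back_dir ob (V x) (W x)) \<longlongrightarrow> back_dir ob v w) F"
proof -
  have ob': "cmod (- ob) < 1"
    using ob by simp
  have b: "cmod (- mobius (- ob) v) < 1"
    using norm_mobius_less_1[OF ob' v] by simp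
  have "((\<lambda>x. - mobius (- ob) (V x)) \<longlongrightarrow> - mobius (- ob) v) F"
    by (intro tendsto_minus tendsto_mobius[OF tendsto_const V ob']) (use v in simp)
  then have ends: "((\<lambda>x. mobius (- mobius (- ob) (V x)) (- W x)) \<longlongrightarrow> mobius (- mobius (- ob) v) (- w)) F"
    by (rule tendsto_mobius[OF _ tendsto_minus[OF W] b]) (use w in simp)
  show ?thesis
    unfolding back_dir_def
    by (rule tendsto_mobius[OF tendsto_const ends ob]) (use norm_mobius_eq_1[OF b, of "- w"] w in simp)
qed

lemma continuous_on_chart_gap:
  assumes ob: "cmod ob < 1"
    and K: "\<And>v w v' w'. ((v, w), (v', w')) \<in> K \<Longrightarrow> cmod v < 1 \<and> cmod w = 1 \<and> cmod v' < 1 \<and> cmod w' = 1"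
  shows "continuous_on K (chart_gap ob)"
  unfolding continuous_on_def
proof
  fix c
  assume "c \<in> K"
  moreover obtain v w v' w' where c: "c = ((v, w), (v', w'))"
    by (metis prod.collapse)
  ultimately have norms: "cmod v < 1" "cmod w = 1" "cmod v' < 1" "cmod w' = 1"
    using K by auto
  have lim: "((\<lambda>x. x) \<longlongrightarrow> c) (at c within K)"
    by (rule tendsto_ident_at)
  have "((\<lambda>x. fst (fst x)) \<longlongrightarrow> v) (at c within K)" "((\<lambda>x. snd (fst x)) \<longlongrightarrow> w) (at c within K)"
    "((\<lambda>x. fst (snd x)) \<longlongrightarrow> v') (at c within K)" "((\<lambda>x. snd (snd x)) \<longlongrightarrow> w') (at c within K)"
    using tendsto_fst[OF tendsto_fst[OF lim]] tendsto_snd[OF tendsto_fst[OF lim]]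
      tendsto_fst[OF tendsto_snd[OF lim]] tendsto_snd[OF tendsto_snd[OF lim]] unfolding c by simp_all
  then have "((\<lambda>x. cmod (fst (fst x) - fst (snd x))
      + cmod (back_dir ob (fst (fst x)) (snd (fst x)) - back_dir ob (fst (snd x)) (snd (snd x))))
      \<longlongrightarrow> cmod (v - v') + cmod (back_dir ob v w - back_dir ob v' w')) (at c within K)"
    by (intro tendsto_intros tendsto_back_dir[OF ob]) (use norms in auto)
  moreover have "chart_gap ob = (\<lambda>x. cmod (fst (fst x) - fst (snd x))
      + cmod (back_dir ob (fst (fst x)) (snd (fst x)) - back_dir ob (fst (snd x)) (snd (snd x))))"
    by (auto simp: chart_gap_def split: prod.split)
  ultimately show "(chart_gap ob \<longlongrightarrow> chart_gap ob c) (at c within K)"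
    unfolding c by (simp add: chart_gap_def)
qed

lemma chart_gap_pos:
  assumes ob: "cmod ob < 1" and R: "R < 1"
    and mlm: "measured_lamination Lm" and mlp: "measured_lamination Lp" and sf: "strongly_fill Lm Lp"
    and c: "c \<in> leaf_chart ob R Lm \<times> leaf_chart ob R Lp"
  shows "chart_gap ob c > 0"
proof (rule ccontr)
  obtain v w v' w' where c_eq: "c = ((v, w), (v', w'))"
    by (metis prod.collapse)
  assume "\<not> chart_gap ob c > 0"
  then have "\<not> 0 < cmod (v - v') + cmod (back_dir ob v w - back_dir ob v' w')"
    unfolding c_eq chart_gap_def by simp
  then have "cmod (v - v') = 0" "cmod (back_dir ob v w - back_dir ob v' w') = 0"
    using norm_ge_zero[of "v - v'"] norm_ge_zero[of "back_dir ob v w - back_dir ob v' w'"] by linarith+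
  then have vv: "v' = v" and dir: "back_dir ob v w = back_dir ob v w'"
    by simp_all
  have chart: "cmod v = R" "cmod w = 1" "cmod w' = 1"
    "range (geodesic_through (mobius (- ob) v) w) \<in> leaves Lm"
    "range (geodesic_through (mobius (- ob) v) w') \<in> leaves Lp"
    using c unfolding c_eq vv leaf_chart_def by auto
  define b where "b = mobius (- ob) v"
  have b: "cmod b < 1" "cmod (- b) < 1"
    unfolding b_def using norm_mobius_less_1[of "- ob" v] ob chart(1) R by auto
  have "mobius (- b) (- w) = mobius (- b) (- w')"
    using dir mobius_inverse[OF ob] norm_mobius_eq_1[OF b(2)] chart(2,3)
    unfolding back_dir_def b_def[symmetric] by (metis norm_minus_cancel order_refl)
  then have "w' = w"
    using mobius_inverse[OF b(2)] chart(2,3) by (metis minus_minus norm_minus_cancel order_refl)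
  then show False
    using strongly_fill_no_common_leaf[OF mlm mlp sf geodesic_line_geodesic_through[OF b(1) chart(2)]]
      chart(4,5) unfolding b_def by simp
qed

lemma leaf_chart_of_leaf:
  assumes ob: "cmod ob < 1" and g: "geodesic_line \<gamma>" and L: "range \<gamma> \<in> leaves L"
    and a: "(\<gamma> \<longlongrightarrow> a) at_bot"
  obtains w where "(mobius ob (\<gamma> t), w) \<in> leaf_chart ob (tanh_half (hdist ob (\<gamma> t))) L"
    and "cmod a = 1" and "back_dir ob (mobius ob (\<gamma> t)) w = mobius ob a"
proof -
  obtain u where u: "cmod u = 1" "(\<lambda>s. \<gamma> (s + t)) = geodesic_through (\<gamma> t) u"
    using geodesic_line_eq_geodesic_through[OF g] by metis
  have b: "cmod (\<gamma> t) < 1"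
    by (rule geodesic_line_in_disk[OF g])
  have "(geodesic_through (\<gamma> t) u \<longlongrightarrow> a) at_bot"
    unfolding u(2)[symmetric] by (rule tendsto_at_bot_shift[OF a])
  then have a_eq: "a = mobius (- \<gamma> t) (- u)"
    using tendsto_unique[OF _ _ geodesic_through_at_bot[OF b u(1)]] by simp
  have b_eq: "mobius (- ob) (mobius ob (\<gamma> t)) = \<gamma> t"
    using mobius_inverse[OF ob] b by simp
  have "range (geodesic_through (\<gamma> t) u) = range \<gamma>"
    unfolding u(2)[symmetric] by (rule range_shift)
  then have "(mobius ob (\<gamma> t), u) \<in> leaf_chart ob (tanh_half (hdist ob (\<gamma> t))) L"
    unfolding leaf_chart_def using norm_mobius_eq_tanh_half_hdist[OF ob b] u(1) b_eq L by simp
  moreover have "cmod a = 1"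
    unfolding a_eq using norm_mobius_eq_1[of "- \<gamma> t" "- u"] b u(1) by simp
  moreover have "back_dir ob (mobius ob (\<gamma> t)) u = mobius ob a"
    unfolding back_dir_def b_eq a_eq ..
  ultimately show ?thesis
    using that by blast
qed

lemma mobius_eq_scaled_visual_dir:
  "cmod ob < 1 \<Longrightarrow> cmod b < 1 \<Longrightarrow> mobius ob b = of_real (tanh_half (hdist ob b)) * visual_dir ob b"
  by (simp add: visual_dir_def norm_mobius_eq_tanh_half_hdist[symmetric])

lemma chart_gap_le_visual_dist:
  assumes ob: "cmod ob < 1" and r: "r > 0"
    and gm: "geodesic_line \<gamma>m" "range \<gamma>m \<in> leaves Lm" "(\<gamma>m \<longlongrightarrow> am) at_bot" "hdist ob (\<gamma>m tm) = r"
    and gp: "geodesic_line \<gamma>p" "range \<gamma>p \<in> leaves Lp" "(\<gamma>p \<longlongrightarrow> ap) at_bot" "hdist ob (\<gamma>p tp) = r"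
  obtains c where "c \<in> leaf_chart ob (tanh_half r) Lm \<times> leaf_chart ob (tanh_half r) Lp"
    and "chart_gap ob c \<le> visual_dist ob am ap + visual_dist ob (\<gamma>m tm) (\<gamma>p tp)"
proof -
  obtain wm where m: "(mobius ob (\<gamma>m tm), wm) \<in> leaf_chart ob (tanh_half r) Lm" "cmod am = 1"
    "back_dir ob (mobius ob (\<gamma>m tm)) wm = mobius ob am"
    using leaf_chart_of_leaf[OF ob gm(1-3), of tm] gm(4) by metis
  obtain wp where p: "(mobius ob (\<gamma>p tp), wp) \<in> leaf_chart ob (tanh_half r) Lp" "cmod ap = 1"
    "back_dir ob (mobius ob (\<gamma>p tp)) wp = mobius ob ap"
    using leaf_chart_of_leaf[OF ob gp(1-3), of tp] gp(4) by metis
  have bm: "cmod (\<gamma>m tm) < 1" and bp: "cmod (\<gamma>p tp) < 1"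
    using geodesic_line_in_disk gm(1) gp(1) by auto
  have targets: "ray_target ob am" "ray_target ob ap" "ray_target ob (\<gamma>m tm)" "ray_target ob (\<gamma>p tp)"
    using m(2) p(2) bm bp gm(4) gp(4) r unfolding ray_target_def by auto
  have "cmod (mobius ob am - mobius ob ap) \<le> visual_dist ob am ap"
    using norm_visual_dir_diff_le_visual_dist[OF ob targets(1,2)] visual_dir_boundary[OF ob] m(2) p(2)
    by simp
  moreover have "cmod (mobius ob (\<gamma>m tm) - mobius ob (\<gamma>p tp)) \<le> visual_dist ob (\<gamma>m tm) (\<gamma>p tp)"
  proof -
    let ?d = "cmod (visual_dir ob (\<gamma>m tm) - visual_dir ob (\<gamma>p tp))"
    have "mobius ob (\<gamma>m tm) - mobius ob (\<gamma>p tp)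
        = of_real (tanh_half r) * (visual_dir ob (\<gamma>m tm) - visual_dir ob (\<gamma>p tp))"
      using mobius_eq_scaled_visual_dir[OF ob bm] mobius_eq_scaled_visual_dir[OF ob bp] gm(4) gp(4)
      by (simp add: algebra_simps)
    then have "cmod (mobius ob (\<gamma>m tm) - mobius ob (\<gamma>p tp)) = tanh_half r * ?d"
      using tanh_half_pos[OF r] by (simp add: norm_mult)
    also have "\<dots> \<le> ?d"
      using abs_tanh_half_less_1[of r] tanh_half_pos[OF r] by (intro mult_left_le_one_le) auto
    also have "\<dots> \<le> visual_dist ob (\<gamma>m tm) (\<gamma>p tp)"
      by (rule norm_visual_dir_diff_le_visual_dist[OF ob targets(3,4)])
    finally show ?thesis .
  qed
  ultimately show ?thesis
    using that[of "((mobius ob (\<gamma>m tm), wm), (mobius ob (\<gamma>p tp), wp))"] m p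
    by (simp add: chart_gap_def)
qed

lemma visual_separation:
  fixes Lm Lp :: "(complex \<times> complex) measure"
  assumes mlm: "measured_lamination Lm" and mlp: "measured_lamination Lp"
    and sf: "strongly_fill Lm Lp" and ob: "cmod ob < 1" and r: "r > 0"
  shows "\<exists>\<epsilon>>0. \<forall>\<gamma>m \<gamma>p am ap tm tp.
      geodesic_line \<gamma>m \<and> range \<gamma>m \<in> leaves Lm \<and>
      geodesic_line \<gamma>p \<and> range \<gamma>p \<in> leaves Lp \<and>
      (\<gamma>m \<longlongrightarrow> am) at_bot \<and> (\<gamma>p \<longlongrightarrow> ap) at_bot \<and>
      hdist ob (\<gamma>m tm) = r \<and> hdist ob (\<gamma>p tp) = r \<longrightarrow>
      visual_dist ob am ap \<ge> \<epsilon> \<or> visual_dist ob (\<gamma>m tm) (\<gamma>p tp) \<ge> \<epsilon>"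
proof -
  define R where "R = tanh_half r"
  have R: "R < 1"
    unfolding R_def using abs_tanh_half_less_1[of r] by simp
  define K where "K = leaf_chart ob R Lm \<times> leaf_chart ob R Lp"
  have "compact K"
    unfolding K_def by (intro compact_Times compact_leaf_chart[OF ob R])
  moreover have "continuous_on K (chart_gap ob)"
    by (rule continuous_on_chart_gap[OF ob]) (use R in \<open>auto simp: K_def leaf_chart_def\<close>)
  moreover have "\<And>c. c \<in> K \<Longrightarrow> 0 < chart_gap ob c"
    unfolding K_def by (rule chart_gap_pos[OF ob R mlm mlp sf])
  ultimately obtain m where m: "m > 0" "\<forall>c\<in>K. m \<le> chart_gap ob c"
    using compact_pos_lower_bound by blast
  show ?thesis
  proof (intro exI[of _ "m / 2"] conjI allI impI; (elim conjE)?)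
    fix \<gamma>m \<gamma>p am ap tm tp
    assume "geodesic_line \<gamma>m" "range \<gamma>m \<in> leaves Lm" "geodesic_line \<gamma>p" "range \<gamma>p \<in> leaves Lp"
      "(\<gamma>m \<longlongrightarrow> am) at_bot" "(\<gamma>p \<longlongrightarrow> ap) at_bot" "hdist ob (\<gamma>m tm) = r" "hdist ob (\<gamma>p tp) = r"
    then obtain c where "c \<in> K" "chart_gap ob c \<le> visual_dist ob am ap + visual_dist ob (\<gamma>m tm) (\<gamma>p tp)"
      using chart_gap_le_visual_dist[OF ob r, of \<gamma>m Lm am tm \<gamma>p Lp ap tp] unfolding K_def R_def by blast
    then show "visual_dist ob am ap \<ge> m / 2 \<or> visual_dist ob (\<gamma>m tm) (\<gamma>p tp) \<ge> m / 2"
      using m by fastforce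
  qed (use m in simp)
qed

theorem corollary3p6:
  fixes Lm Lp :: "(complex \<times> complex) measure" and ob :: complex
  assumes "measured_lamination Lm" and "measured_lamination Lp"
    and "bounded_lam Lm" and "bounded_lam Lp"
    and "strongly_fill Lm Lp"
    and "ob \<in> hdisk"
  shows "\<forall>n::nat. n > 0 \<longrightarrow> (\<exists>\<epsilon>>0. \<forall>\<gamma>m \<gamma>p am ap tm tp.
      geodesic_line \<gamma>m \<and> range \<gamma>m \<in> leaves Lm \<and>
      geodesic_line \<gamma>p \<and> range \<gamma>p \<in> leaves Lp \<and>
      (\<gamma>m \<longlongrightarrow> am) at_bot \<and> (\<gamma>p \<longlongrightarrow> ap) at_bot \<and>
      first_hit ob (real n) \<gamma>m tm \<and> first_hit ob (real n) \<gamma>p tp \<longrightarrow>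
      visual_dist ob am ap \<ge> \<epsilon> \<or> visual_dist ob (\<gamma>m tm) (\<gamma>p tp) \<ge> \<epsilon>)"
proof (intro allI impI)
  fix n :: nat
  assume "n > 0"
  moreover have "cmod ob < 1"
    using assms(6) by (simp add: hdisk_def)
  ultimately obtain \<epsilon> where "\<epsilon> > 0" and "\<forall>\<gamma>m \<gamma>p am ap tm tp.
      geodesic_line \<gamma>m \<and> range \<gamma>m \<in> leaves Lm \<and>
      geodesic_line \<gamma>p \<and> range \<gamma>p \<in> leaves Lp \<and>
      (\<gamma>m \<longlongrightarrow> am) at_bot \<and> (\<gamma>p \<longlongrightarrow> ap) at_bot \<and>
      hdist ob (\<gamma>m tm) = real n \<and> hdist ob (\<gamma>p tp) = real n \<longrightarrow>
      visual_dist ob am ap \<ge> \<epsilon> \<or> visual_dist ob (\<gamma>m tm) (\<gamma>p tp) \<ge> \<epsilon>"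
    using visual_separation[OF assms(1,2,5), of ob "real n"] by auto
  then show "\<exists>\<epsilon>>0. \<forall>\<gamma>m \<gamma>p am ap tm tp.
      geodesic_line \<gamma>m \<and> range \<gamma>m \<in> leaves Lm \<and>
      geodesic_line \<gamma>p \<and> range \<gamma>p \<in> leaves Lp \<and>
      (\<gamma>m \<longlongrightarrow> am) at_bot \<and> (\<gamma>p \<longlongrightarrow> ap) at_bot \<and>
      first_hit ob (real n) \<gamma>m tm \<and> first_hit ob (real n) \<gamma>p tp \<longrightarrow>
      visual_dist ob am ap \<ge> \<epsilon> \<or> visual_dist ob (\<gamma>m tm) (\<gamma>p tp) \<ge> \<epsilon>"
    unfolding first_hit_def by blast
qed

end
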